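(* Consider the multi-agent bandit setting described in the context with exactly one malicious agent ($m=1$, agent $n+1$), whose recommendation distribution $\nu_{j,i}^{(n+1)}$ is the uniform distribution over $\{1,\ldots,K\}$ for every honest agent $i\in\{1,\ldots,n\}$ and every phase $j\in\mathbb{N}$. Suppose every honest agent runs the multi-agent algorithm with inputs $\alpha>1$, $\beta>1$ and sticky sets $\hat S^{(i)}$, with no blocklist updates (so $P_j^{(i)}=\emptyset$ for all $i,j$). Assume $1\in\bigcup_{i=1}^n \hat S^{(i)}$. Then for any $\varepsilon\in(0,1)$ independent of $T$ and any $i\in\{1,\ldots,n\}$, $$\lim_{T\to\infty}\mathbb{P}\left(\frac{R_T^{(i)}}{\log T}\ge (1-\varepsilon)\,\alpha\left(1-\frac{1}{\sqrt{\alpha}}\right)^2\sum_{k=2}^K\frac{1}{\Delta_k}\right)=1,$$ and consequently $$\liminf_{T\to\infty}\frac{\mathbb{E}R_T^{(i)}}{\log T}\ge \alpha\left(1-\frac{1}{\sqrt{\alpha}}\right)^2\sum_{k=2}^K\frac{1}{\Delta_k}.$$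
   Context: Bandit: $K$ arms $1,\ldots,K$; arm $k$ yields Bernoulli$(\mu_k)$ rewards with $\mu_k\in(0,1)$, independent across agents and across pulls; $\mu_1>\mu_2\ge\cdots\ge\mu_K$, and $\Delta_k=\mu_1-\mu_k$. There are $n$ honest agents $1,\ldots,n$ and $m$ malicious agents $n+1,\ldots,n+m$, all able to communicate with each other. All random variables live on a common probability space $(\Omega,\mathcal F,\mathbb P)$. For honest agent $i$, $I_t^{(i)}$ is the arm pulled at time $t\in\mathbb N$, $T_k^{(i)}(t)$ the number of pulls of arm $k$ by $i$ during times $1,\ldots,t$, $\hat\mu_k^{(i)}(t)$ the average reward of those pulls, and the regret is $R_T^{(i)}=\sum_{t=1}^T\Delta_{I_t^{(i)}}$. Algorithm (run by each honest agent $i$) with inputs $\alpha>0$, $\beta>1$, a sticky set $\hat S^{(i)}\subset\{1,\ldots,K\}$ of size $S$: set $A_0=0$, $A_j=\lceil j^\beta\rceil$; phase $j$ consists of times $A_{j-1}+1,\ldots,A_j$. Blocklists $P_j^{(i)}\subset\{1,\ldots,n+m\}$ start empty. The initial active set is $S_1^{(i)}=\hat S^{(i)}\cup\{U_1^{(i)},L_1^{(i)}\}$ with $U_1^{(i)},L_1^{(i)}$ distinct arms not in $\hat S^{(i)}$. At each time $t$ in phase $j$, $i$ pulls $I_t^{(i)}\in\arg\max_{k\in S_j^{(i)}}\hat\mu_k^{(i)}(t-1)+\sqrt{\alpha\log(t)/T_k^{(i)}(t-1)}$. At $t=A_j$: $B_j^{(i)}\in\arg\max_{k\in S_j^{(i)}}T_k^{(i)}(A_j)-T_k^{(i)}(A_{j-1})$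 (most played active arm in phase $j$); the blocklists are updated (here: no update); then an agent $H_j^{(i)}$ is drawn uniformly at random from $\{1,\ldots,n+m\}\setminus(P_j^{(i)}\cup\{i\})$; if $H_j^{(i)}\le n$ the recommendation is $R_j^{(i)}=B_j^{(H_j^{(i)})}$, otherwise $R_j^{(i)}$ is sampled from $\nu_{j,i}^{(H_j^{(i)})}$, where each $\nu_{j,i}^{(i')}$ is an $\mathcal F$-measurable map from $\Omega$ to probability distributions on $\{1,\ldots,K\}$. If $R_j^{(i)}\in S_j^{(i)}$ then $S_{j+1}^{(i)}=S_j^{(i)}$; otherwise $U_{j+1}^{(i)}\in\arg\max_{k\in\{U_j^{(i)},L_j^{(i)}\}}T_k^{(i)}(A_j)-T_k^{(i)}(A_{j-1})$, $L_{j+1}^{(i)}=R_j^{(i)}$, and $S_{j+1}^{(i)}=\hat S^{(i)}\cup\{U_{j+1}^{(i)},L_{j+1}^{(i)}\}$ (otherwise $U,L$ are unchanged). *)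

theory Defs
  imports "HOL-Probability.Probability"
begin

text \<open>Independent random sources driving the system:
  Rew i k s : the s-th reward of arm k observed by honest agent i (value 0 or 1);
  Hsel i j  : the agent contacted by honest agent i at the end of phase j;
  Mal i j   : the sample from the malicious agent's recommendation distribution
              for honest agent i in phase j.\<close>
datatype src = Rew nat nat nat | Hsel nat nat | Mal nat nat

definition src_idx :: "nat \<Rightarrow> nat \<Rightarrow> src set" where
  "src_idx n K =
     {Rew i k s | i k s. i \<in> {1..n} \<and> k \<in> {1..K} \<and> 1 \<le> s}
   \<union> {Hsel i j | i j. i \<in> {1..n} \<and> 1 \<le> j}
   \<union> {Mal i j | i j. i \<in> {1..n} \<and> 1 \<le> j}"

definition bern01 :: "real \<Rightarrow> nat pmf" where
  "bern01 p = map_pmf (\<lambda>b. if b then 1 else 0) (bernoulli_pmf p)"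

definition phase_end :: "real \<Rightarrow> nat \<Rightarrow> nat" where
  "phase_end \<beta> j = nat \<lceil>real j powr \<beta>\<rceil>"

definition phase_of :: "real \<Rightarrow> nat \<Rightarrow> nat" where
  "phase_of \<beta> t = (LEAST j. t \<le> phase_end \<beta> j)"

definition pulls :: "(nat \<Rightarrow> nat \<Rightarrow> 'w \<Rightarrow> nat) \<Rightarrow> nat \<Rightarrow> nat \<Rightarrow> nat \<Rightarrow> 'w \<Rightarrow> nat" where
  "pulls I i k t \<omega> = card {s \<in> {1..t}. I i s \<omega> = k}"

text \<open>Empirical mean of arm k for agent i after time t (the r-th pull of arm k by
  agent i yields the reward Z (Rew i k r)).\<close>
definition muhat :: "(src \<Rightarrow> 'w \<Rightarrow> nat) \<Rightarrow> (nat \<Rightarrow> nat \<Rightarrow> 'w \<Rightarrow> nat)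
    \<Rightarrow> nat \<Rightarrow> nat \<Rightarrow> nat \<Rightarrow> 'w \<Rightarrow> real" where
  "muhat Z I i k t \<omega> =
     (\<Sum>r = 1..pulls I i k t \<omega>. real (Z (Rew i k r) \<omega>)) / real (pulls I i k t \<omega>)"

definition ucb :: "real \<Rightarrow> (src \<Rightarrow> 'w \<Rightarrow> nat) \<Rightarrow> (nat \<Rightarrow> nat \<Rightarrow> 'w \<Rightarrow> nat)
    \<Rightarrow> nat \<Rightarrow> nat \<Rightarrow> nat \<Rightarrow> 'w \<Rightarrow> ereal" where
  "ucb \<alpha> Z I i k t \<omega> =
     (if pulls I i k (t - 1) \<omega> = 0 then \<infinity>
      else ereal (muhat Z I i k (t - 1) \<omega>
                  + sqrt (\<alpha> * ln (real t) / real (pulls I i k (t - 1) \<omega>))))"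

definition phase_plays :: "real \<Rightarrow> (nat \<Rightarrow> nat \<Rightarrow> 'w \<Rightarrow> nat) \<Rightarrow> nat \<Rightarrow> nat \<Rightarrow> nat \<Rightarrow> 'w \<Rightarrow> nat" where
  "phase_plays \<beta> I i k j \<omega> =
     pulls I i k (phase_end \<beta> j) \<omega> - pulls I i k (phase_end \<beta> (j - 1)) \<omega>"

definition regret :: "(nat \<Rightarrow> real) \<Rightarrow> (nat \<Rightarrow> nat \<Rightarrow> 'w \<Rightarrow> nat) \<Rightarrow> nat \<Rightarrow> nat \<Rightarrow> 'w \<Rightarrow> real" where
  "regret \<mu> I i T \<omega> = (\<Sum>t = 1..T. \<mu> 1 - \<mu> (I i t \<omega>))"

end

theory Submission
  imports Defs "HOL-Real_Asymp.Real_Asymp"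
begin

(* Each phase, with probability 1 / (n K), agent i contacts the malicious agent and is recommended
   a given suboptimal arm k, which is then active throughout the next phase. Hence, with probability
   tending to 1, every such k is recommended in one of the late phases j > J / 2, J being the phase
   containing T. Phase j + 1 lasts about j^(beta - 1) steps, far more than log T. If k had fewer than
   c ln T / Delta_k^2 pulls, some time t of that phase would, by pigeonhole, pull an arm already
   pulled order log T times, whose UCB index is below mu_1 + eta by Hoeffding; but as ln t >= l ln T,
   the index of k is at least mu_k + (sqrt (alpha l) - 1) sqrt (ln T / T_k(T)), which suitable
   l < 1 and eta > 0 make larger. So T_k(T) >= c ln T / Delta_k^2 for c arbitrarily close to
   alpha (1 - 1 / sqrt alpha)^2, and R_T = sum_k Delta_k T_k(T). The bound in expectation follows
   since the regret is nonnegative. *)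

section \<open>Phases\<close>

lemma phase_end_0 [simp]: "phase_end \<beta> 0 = 0"
  unfolding phase_end_def by (cases "\<beta> = 0") auto

lemma powr_le_phase_end: "real j powr \<beta> \<le> real (phase_end \<beta> j)"
  unfolding phase_end_def by linarith

lemma phase_end_less_powr_add_1: "real (phase_end \<beta> j) < real j powr \<beta> + 1"
proof -
  have "0 \<le> \<lceil>real j powr \<beta>\<rceil>"
    using ceiling_mono[of 0 "real j powr \<beta>"] by simp
  then show ?thesis
    unfolding phase_end_def using ceiling_correct[of "real j powr \<beta>"] by (simp add: of_nat_nat)
qed

lemma powr_add_powr_diff_le:
  assumes "\<beta> \<ge> 1"
  shows "real j powr \<beta> + real (Suc j) powr (\<beta> - 1) \<le> real (Suc j) powr \<beta>"
proof (cases "j = 0")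
  case False
  have "real j powr \<beta> = real j powr (\<beta> - 1) * real j"
    using False by (simp add: powr_diff)
  also have "\<dots> \<le> real (Suc j) powr (\<beta> - 1) * real j"
    using assms by (intro mult_right_mono powr_mono2) auto
  also have "\<dots> = real (Suc j) powr \<beta> - real (Suc j) powr (\<beta> - 1)"
  proof -
    have "real (Suc j) powr (\<beta> - 1) * real (Suc j) = real (Suc j) powr \<beta>"
      by (simp add: powr_diff del: of_nat_Suc)
    then show ?thesis by (simp add: algebra_simps)
  qed
  finally show ?thesis by simp
qed simp

lemma phase_end_strict_mono:
  assumes "\<beta> \<ge> 1"
  shows "strict_mono (phase_end \<beta>)"
proof (rule strict_monoI_Suc)
  fix j
  have "1 \<le> real (Suc j) powr (\<beta> - 1)" using assms by (simp add: ge_one_powr_ge_zero)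
  then have "real j powr \<beta> + 1 \<le> real (Suc j) powr \<beta>"
    using powr_add_powr_diff_le[OF assms, of j] by linarith
  then show "phase_end \<beta> j < phase_end \<beta> (Suc j)"
    using phase_end_less_powr_add_1[of \<beta> j] powr_le_phase_end[of "Suc j" \<beta>] by linarith
qed

lemma phase_of_eqI:
  assumes "\<beta> \<ge> 1" "phase_end \<beta> j < t" "t \<le> phase_end \<beta> (Suc j)"
  shows "phase_of \<beta> t = Suc j"
  unfolding phase_of_def
proof (rule Least_equality)
  fix y assume "t \<le> phase_end \<beta> y"
  with assms have "phase_end \<beta> j < phase_end \<beta> y" by linarith
  then show "Suc j \<le> y"
    using strict_mono_less[OF phase_end_strict_mono[OF assms(1)]] by (simp add: Suc_le_eq)
qed (fact assms(3))

lemma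
  assumes "\<beta> \<ge> 1" "1 \<le> t"
  shows phase_of_ge_1: "1 \<le> phase_of \<beta> t"
    and le_phase_end_phase_of: "t \<le> phase_end \<beta> (phase_of \<beta> t)"
    and phase_end_pred_phase_of_less: "phase_end \<beta> (phase_of \<beta> t - 1) < t"
proof -
  have "t \<le> phase_end \<beta> t"
    using strict_mono_imp_increasing[OF phase_end_strict_mono[OF assms(1)]] .
  then show le: "t \<le> phase_end \<beta> (phase_of \<beta> t)"
    unfolding phase_of_def by (rule LeastI)
  show ge: "1 \<le> phase_of \<beta> t"
    using le assms(2) by (cases "phase_of \<beta> t") auto
  have "\<not> t \<le> phase_end \<beta> (phase_of \<beta> t - 1)"
    unfolding phase_of_def by (rule not_less_Least) (use ge in \<open>simp add: phase_of_def\<close>)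
  then show "phase_end \<beta> (phase_of \<beta> t - 1) < t" by simp
qed

lemma filterlim_phase_of_at_top:
  assumes "\<beta> \<ge> 1"
  shows "filterlim (phase_of \<beta>) at_top at_top"
  unfolding filterlim_at_top
proof
  fix j
  show "\<forall>\<^sub>F t in at_top. j \<le> phase_of \<beta> t"
    using eventually_ge_at_top[of "Suc (phase_end \<beta> j)"]
  proof eventually_elim
    case (elim t)
    then have "phase_end \<beta> j < phase_end \<beta> (phase_of \<beta> t)"
      using le_phase_end_phase_of[OF assms, of t] by linarith
    then show ?case
      using strict_mono_less[OF phase_end_strict_mono[OF assms]] by simp
  qed
qed

lemma ln_le_ln_phase_end:
  assumes "0 \<le> \<beta>" "1 \<le> J" "1 \<le> T" "T \<le> phase_end \<beta> J"
  shows "ln (real T) \<le> ln 2 + \<beta> * ln (real J)"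
proof -
  have J: "1 \<le> real J powr \<beta>" using assms by (simp add: ge_one_powr_ge_zero)
  have "real T < real J powr \<beta> + 1"
    using assms(4) phase_end_less_powr_add_1[of \<beta> J] by linarith
  also have "\<dots> \<le> 2 * real J powr \<beta>" using J by simp
  finally have "ln (real T) \<le> ln (2 * real J powr \<beta>)"
    using assms(2,3) J by (subst ln_le_cancel_iff) auto
  also have "\<dots> = ln 2 + \<beta> * ln (real J)" using assms(2) by (simp add: ln_mult ln_powr)
  finally show ?thesis .
qed

lemma ln_ge_after_phase_end:
  assumes "1 \<le> j" "phase_end \<beta> j < t"
  shows "\<beta> * ln (real j) \<le> ln (real t)"
proof -
  have "real j powr \<beta> < real t"
    using powr_le_phase_end[of j \<beta>] assms(2) by linarith
  moreover have "0 < real j powr \<beta>" using assms(1) by simp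
  ultimately have "ln (real j powr \<beta>) \<le> ln (real t)"
    using ln_le_cancel_iff[of "real j powr \<beta>" "real t"] by linarith
  moreover have "ln (real j powr \<beta>) = \<beta> * ln (real j)" using assms(1) by (simp add: ln_powr)
  ultimately show ?thesis by simp
qed

lemma phase_length_ge:
  assumes "\<beta> \<ge> 1" "0 \<le> x" "x \<le> real (Suc j)"
  shows "x powr (\<beta> - 1) - 1 \<le> real (phase_end \<beta> (Suc j) - phase_end \<beta> j)"
proof -
  have "phase_end \<beta> j \<le> phase_end \<beta> (Suc j)"
    using phase_end_strict_mono[OF assms(1)] by (simp add: strict_mono_less_eq)
  moreover have "x powr (\<beta> - 1) \<le> real (Suc j) powr (\<beta> - 1)"
    using assms by (intro powr_mono2) auto
  ultimately show ?thesis
    using powr_add_powr_diff_le[OF assms(1), of j] powr_le_phase_end[of "Suc j" \<beta>]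
      phase_end_less_powr_add_1[of \<beta> j]
    by (simp add: of_nat_diff)
qed

text \<open>For \<open>J\<close> the phase containing \<open>T\<close>: phase \<open>j + 1\<close> has ended by time \<open>T\<close>, and since
  \<open>j > J / 2\<close>, \<open>ln t\<close> is a fixed fraction of \<open>ln T\<close> during it.\<close>
definition late_phases :: "real \<Rightarrow> nat \<Rightarrow> nat set" where
  "late_phases \<beta> T = {phase_of \<beta> T div 2 + 1 .. phase_of \<beta> T - 2}"

lemma filterlim_card_late_phases:
  assumes "\<beta> \<ge> 1"
  shows "filterlim (\<lambda>T. card (late_phases \<beta> T)) at_top at_top"
proof -
  have "filterlim (\<lambda>J::nat. J - 2 - J div 2) at_top at_top"
    unfolding filterlim_at_top
  proof
    fix z :: nat
    show "\<forall>\<^sub>F J in at_top. z \<le> J - 2 - J div 2"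
      using eventually_ge_at_top[of "2 * z + 4"]
      by eventually_elim (use div_times_less_eq_dividend[of _ 2] in arith)
  qed
  from filterlim_compose[OF this filterlim_phase_of_at_top[OF assms]] show ?thesis
    by (simp add: late_phases_def)
qed

lemma eventually_phase_index_large:
  assumes "\<beta> > 1" "l < 1"
  shows "\<forall>\<^sub>F J in sequentially. 4 \<le> J \<and>
           l * (ln 2 + \<beta> * ln (real J)) \<le> \<beta> * (ln (real J) - ln 2) \<and>
           D * (ln 2 + \<beta> * ln (real J)) + D' \<le> (real J / 2) powr (\<beta> - 1) - 1"
proof -
  have "filterlim (\<lambda>J::nat. (1 - l) * \<beta> * ln (real J) - (l + \<beta>) * ln 2) at_top at_top"
    using assms by real_asymp
  then have ln_J: "\<forall>\<^sub>F J in sequentially. l * (ln 2 + \<beta> * ln (real J)) \<le> \<beta> * (ln (real J) - ln 2)"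
    unfolding filterlim_at_top by (rule eventually_mono[OF spec[of _ 0]]) (simp add: algebra_simps)
  have "filterlim (\<lambda>J::nat. (real J / 2) powr (\<beta> - 1) - 1 - D * (ln 2 + \<beta> * ln (real J)) - D')
          at_top at_top"
    using assms by real_asymp
  then have length_J: "\<forall>\<^sub>F J in sequentially.
      D * (ln 2 + \<beta> * ln (real J)) + D' \<le> (real J / 2) powr (\<beta> - 1) - 1"
    unfolding filterlim_at_top by (rule eventually_mono[OF spec[of _ 0]]) (simp add: algebra_simps)
  show ?thesis using eventually_ge_at_top[of 4] ln_J length_J by eventually_elim auto
qed

lemma eventually_late_phases:
  assumes "\<beta> > 1" "0 \<le> l" "l < 1" "0 \<le> D"
  shows "\<forall>\<^sub>F T in sequentially. \<forall>j \<in> late_phases \<beta> T.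
           1 \<le> j \<and> phase_end \<beta> (Suc j) \<le> T \<and>
           (\<forall>t. phase_end \<beta> j < t \<longrightarrow> l * ln (real T) \<le> ln (real t)) \<and>
           D * ln (real T) + D' \<le> real (phase_end \<beta> (Suc j) - phase_end \<beta> j)"
proof -
  have "\<forall>\<^sub>F T in sequentially. 4 \<le> phase_of \<beta> T \<and>
      l * (ln 2 + \<beta> * ln (real (phase_of \<beta> T))) \<le> \<beta> * (ln (real (phase_of \<beta> T)) - ln 2) \<and>
      D * (ln 2 + \<beta> * ln (real (phase_of \<beta> T))) + D'
        \<le> (real (phase_of \<beta> T) / 2) powr (\<beta> - 1) - 1"
    using filterlim_iff[THEN iffD1, OF filterlim_phase_of_at_top, rule_format,
        OF _ eventually_phase_index_large[OF assms(1,3)]] assms(1)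
    by simp
  then show ?thesis
    using eventually_ge_at_top[of 1]
  proof eventually_elim
    case (elim T)
    define J where "J = phase_of \<beta> T"
    have J: "4 \<le> J" "l * (ln 2 + \<beta> * ln (real J)) \<le> \<beta> * (ln (real J) - ln 2)"
      "D * (ln 2 + \<beta> * ln (real J)) + D' \<le> (real J / 2) powr (\<beta> - 1) - 1"
      using elim unfolding J_def by auto
    have T: "T \<le> phase_end \<beta> J" "phase_end \<beta> (J - 1) < T"
      using le_phase_end_phase_of phase_end_pred_phase_of_less assms(1) elim unfolding J_def by auto
    have ln_T: "ln (real T) \<le> ln 2 + \<beta> * ln (real J)"
      using ln_le_ln_phase_end[OF _ _ _ T(1)] assms(1) J(1) elim by auto
    show ?case
    proof
      fix j assume "j \<in> late_phases \<beta> T"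
      then have j: "J div 2 + 1 \<le> j" "j \<le> J - 2" unfolding late_phases_def J_def by auto
      then have half: "real J / 2 \<le> real j" by linarith
      have "phase_end \<beta> (Suc j) \<le> phase_end \<beta> (J - 1)"
        using strict_mono_leD[OF phase_end_strict_mono] assms(1) j J(1) by simp
      moreover have "l * ln (real T) \<le> ln (real t)" if "phase_end \<beta> j < t" for t
      proof -
        have "l * ln (real T) \<le> l * (ln 2 + \<beta> * ln (real J))"
          using ln_T assms(2) by (rule mult_left_mono)
        also have "\<dots> \<le> \<beta> * ln (real J / 2)" using J(2) J(1) by (simp add: ln_div)
        also have "\<dots> \<le> \<beta> * ln (real j)"
          using half J(1) assms(1) by (intro mult_left_mono) auto
        also have "\<dots> \<le> ln (real t)" using ln_ge_after_phase_end that j J(1) by simp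
        finally show ?thesis .
      qed
      moreover have "D * ln (real T) + D' \<le> real (phase_end \<beta> (Suc j) - phase_end \<beta> j)"
      proof -
        have "D * ln (real T) + D' \<le> D * (ln 2 + \<beta> * ln (real J)) + D'"
          using ln_T assms(4) by (simp add: mult_left_mono)
        also have "\<dots> \<le> (real J / 2) powr (\<beta> - 1) - 1" by (fact J(3))
        also have "\<dots> \<le> real (phase_end \<beta> (Suc j) - phase_end \<beta> j)"
          using j assms(1) by (intro phase_length_ge) auto
        finally show ?thesis .
      qed
      ultimately show "1 \<le> j \<and> phase_end \<beta> (Suc j) \<le> T \<and>
          (\<forall>t. phase_end \<beta> j < t \<longrightarrow> l * ln (real T) \<le> ln (real t)) \<and>
          D * ln (real T) + D' \<le> real (phase_end \<beta> (Suc j) - phase_end \<beta> j)"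
        using j T(2) by auto
    qed
  qed
qed


lemma pulls_Suc:
  "pulls I a k (Suc t) \<omega> = pulls I a k t \<omega> + (if I a (Suc t) \<omega> = k then 1 else 0)"
proof -
  have "{s \<in> {1..Suc t}. I a s \<omega> = k} =
      {s \<in> {1..t}. I a s \<omega> = k} \<union> (if I a (Suc t) \<omega> = k then {Suc t} else {})"
    by (auto simp: le_Suc_eq)
  then show ?thesis unfolding pulls_def by (auto simp: card_insert_if)
qed

lemma pulls_le: "pulls I a k t \<omega> \<le> t"
  unfolding pulls_def by (rule order.trans[OF card_mono[of "{1..t}"]]) auto

lemma pulls_mono: "s \<le> t \<Longrightarrow> pulls I a k s \<omega> \<le> pulls I a k t \<omega>"
  unfolding pulls_def by (rule card_mono) auto

lemma pulls_pulled:
  "1 \<le> t \<Longrightarrow> I a t \<omega> = k \<Longrightarrow> pulls I a k t \<omega> = Suc (pulls I a k (t - 1) \<omega>)"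
  using pulls_Suc[of I a k "t - 1" \<omega>] by (cases t) auto

lemma card_pulls_below:
  "card {s \<in> {1..T}. I a s \<omega> = k \<and> pulls I a k (s - 1) \<omega> < N} \<le> N"
proof -
  let ?A = "{s \<in> {1..T}. I a s \<omega> = k \<and> pulls I a k (s - 1) \<omega> < N}"
  have "pulls I a k (s - 1) \<omega> \<noteq> pulls I a k (s' - 1) \<omega>" if "s \<in> ?A" "s' \<in> ?A" "s < s'" for s s'
  proof -
    have "pulls I a k (s - 1) \<omega> < pulls I a k s \<omega>" using that(1) by (simp add: pulls_pulled)
    also have "\<dots> \<le> pulls I a k (s' - 1) \<omega>" using that(3) by (intro pulls_mono) simp
    finally show ?thesis by simp
  qed
  then have "inj_on (\<lambda>s. pulls I a k (s - 1) \<omega>) ?A"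
    by (intro linorder_inj_onI')
  moreover have "(\<lambda>s. pulls I a k (s - 1) \<omega>) ` ?A \<subseteq> {..<N}" by auto
  ultimately show ?thesis using card_inj_on_le[of _ ?A "{..<N}"] by simp
qed

lemma regret_eq_sum_pulls:
  assumes "\<forall>t \<in> {1..T}. I a t \<omega> \<in> {1..K}"
  shows "regret \<mu> I a T \<omega> = (\<Sum>k = 1..K. (\<mu> 1 - \<mu> k) * real (pulls I a k T \<omega>))"
proof -
  have "regret \<mu> I a T \<omega> =
      (\<Sum>k \<in> (\<lambda>t. I a t \<omega>) ` {1..T}. \<Sum>t \<in> {t \<in> {1..T}. I a t \<omega> = k}. \<mu> 1 - \<mu> (I a t \<omega>))"
    unfolding regret_def by (rule sum.image_gen) simp
  also have "\<dots> = (\<Sum>k \<in> (\<lambda>t. I a t \<omega>) ` {1..T}. (\<mu> 1 - \<mu> k) * real (pulls I a k T \<omega>))"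
    unfolding pulls_def by (intro sum.cong refl) simp
  also have "\<dots> = (\<Sum>k = 1..K. (\<mu> 1 - \<mu> k) * real (pulls I a k T \<omega>))"
  proof (rule sum.mono_neutral_left)
    show "(\<lambda>t. I a t \<omega>) ` {1..T} \<subseteq> {1..K}" using assms by auto
    show "\<forall>k \<in> {1..K} - (\<lambda>t. I a t \<omega>) ` {1..T}. (\<mu> 1 - \<mu> k) * real (pulls I a k T \<omega>) = 0"
      unfolding pulls_def by auto
  qed simp
  finally show ?thesis .
qed


lemma exp_neg_2_ln:
  fixes x :: real
  assumes "0 < x"
  shows "exp (-2 * ln x) = 1 / x\<^sup>2"
proof -
  have "2 * ln x = ln (x\<^sup>2)" using assms by (simp add: ln_realpow)
  then show ?thesis using assms by (simp add: exp_minus inverse_eq_divide)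
qed

lemma sqrt_lower_bound_constant:
  fixes \<alpha> \<epsilon> :: real
  assumes "1 < \<alpha>" "\<epsilon> \<le> 1"
  shows "sqrt ((1 - \<epsilon>) * \<alpha> * (1 - 1 / sqrt \<alpha>)\<^sup>2) = sqrt (1 - \<epsilon>) * (sqrt \<alpha> - 1)"
proof -
  have "1 < sqrt \<alpha>" using assms(1) by simp
  then have "\<alpha> * (1 - 1 / sqrt \<alpha>)\<^sup>2 = (sqrt \<alpha> - 1)\<^sup>2"
    using assms(1) by (simp add: field_simps power2_eq_square)
  then show ?thesis using \<open>1 < sqrt \<alpha>\<close> assms(2) by (simp add: mult.assoc real_sqrt_mult)
qed

text \<open>In \<open>pulls_ge_if_attacked\<close>, \<open>l\<close> bounds \<open>ln t / ln T\<close> from below in late phases and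
  \<open>\<eta>\<close> is the slack of a well-explored arm's index over \<open>\<mu>\<^sub>1\<close>; the last condition, for all gaps
  \<open>\<Delta> \<ge> D\<close>, is what makes the index comparison there fail.\<close>
lemma exists_slack_parameters:
  fixes \<alpha> \<epsilon> D :: real
  assumes \<alpha>: "1 < \<alpha>" and \<epsilon>: "0 < \<epsilon>" "\<epsilon> < 1" and D: "0 < D"
  obtains l \<eta> where "0 \<le> l" "l < 1" "0 < \<eta>" "1 < sqrt (\<alpha> * l)"
    "\<And>\<Delta>. D \<le> \<Delta> \<Longrightarrow> sqrt ((1 - \<epsilon>) * \<alpha> * (1 - 1 / sqrt \<alpha>)\<^sup>2) * (\<Delta> + \<eta>) \<le> (sqrt (\<alpha> * l) - 1) * \<Delta>"
proof
  define s where "s = sqrt \<alpha>"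
  define r where "r = sqrt (sqrt (1 - \<epsilon>))"
  have s: "1 < s" unfolding s_def using \<alpha> by simp
  have r: "0 < r" "r < 1" unfolding r_def using \<epsilon> by auto
  have "0 < r * (s - 1)" "r * (s - 1) < s - 1" using r s by simp_all
  then have between: "1 < 1 + r * (s - 1)" "1 + r * (s - 1) < s" by linarith+
  define l where "l = ((1 + r * (s - 1)) / s)\<^sup>2"
  define \<eta> where "\<eta> = D * (1 / r - 1)"
  have sqrt_l: "sqrt (\<alpha> * l) = 1 + r * (s - 1)"
  proof -
    have "\<alpha> * l = (1 + r * (s - 1))\<^sup>2"
      unfolding l_def using s \<alpha> by (simp add: s_def power_divide)
    then show ?thesis using between by simp
  qed
  show "0 \<le> l" unfolding l_def by simp
  show "l < 1" unfolding l_def using between s by (simp add: power_less_one_iff)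
  show "0 < \<eta>" unfolding \<eta>_def using r D by simp
  show "1 < sqrt (\<alpha> * l)" using sqrt_l between by simp
  fix \<Delta> assume "D \<le> \<Delta>"
  have "r * \<eta> = D * (1 - r)" unfolding \<eta>_def using r by (simp add: field_simps)
  also have "\<dots> \<le> \<Delta> * (1 - r)" using \<open>D \<le> \<Delta>\<close> r by (intro mult_right_mono) auto
  finally have "r * (\<Delta> + \<eta>) \<le> \<Delta>" by (simp add: algebra_simps)
  then have "r * (s - 1) * (r * (\<Delta> + \<eta>)) \<le> r * (s - 1) * \<Delta>"
    using r s by (intro mult_left_mono) auto
  moreover have "sqrt ((1 - \<epsilon>) * \<alpha> * (1 - 1 / sqrt \<alpha>)\<^sup>2) = r * r * (s - 1)"
    using sqrt_lower_bound_constant[OF \<alpha>, of \<epsilon>] \<epsilon> unfolding r_def s_def by simp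
  ultimately show "sqrt ((1 - \<epsilon>) * \<alpha> * (1 - 1 / sqrt \<alpha>)\<^sup>2) * (\<Delta> + \<eta>) \<le> (sqrt (\<alpha> * l) - 1) * \<Delta>"
    unfolding sqrt_l by (simp add: ac_simps)
qed

lemma slack_less_bonus_gap:
  fixes c s \<Delta> \<eta> L m :: real
  assumes "0 < c" "1 < s" "0 < \<Delta>" "0 < m" "\<Delta>\<^sup>2 * m < c * L"
    and "sqrt c * (\<Delta> + \<eta>) \<le> (s - 1) * \<Delta>"
  shows "\<Delta> + \<eta> < (s - 1) * sqrt (L / m)"
proof -
  have "\<Delta>\<^sup>2 / c < L / m" using assms by (simp add: field_simps)
  then have "sqrt (\<Delta>\<^sup>2 / c) < sqrt (L / m)" by (rule real_sqrt_less_mono)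
  then have "\<Delta> / sqrt c < sqrt (L / m)" using assms(1,3) by (simp add: real_sqrt_divide)
  then have "(s - 1) * (\<Delta> / sqrt c) < (s - 1) * sqrt (L / m)"
    using assms(2) by (intro mult_strict_left_mono) auto
  moreover have "\<Delta> + \<eta> \<le> (s - 1) * (\<Delta> / sqrt c)" using assms(1,6) by (simp add: field_simps)
  ultimately show ?thesis by linarith
qed


lemma (in prob_space) liminf_expectation_ge_of_tendsto_prob:
  fixes X :: "nat \<Rightarrow> 'a \<Rightarrow> real" and a :: "nat \<Rightarrow> real"
  assumes integrable: "\<And>T. integrable M (X T)"
    and nonneg: "\<And>T. AE \<omega> in M. 0 \<le> X T \<omega>"
    and a: "\<forall>\<^sub>F T in sequentially. 0 < a T"
    and c: "0 < c"
    and tendsto: "\<And>\<epsilon>. 0 < \<epsilon> \<Longrightarrow> \<epsilon> < 1 \<Longrightarrow>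
      (\<lambda>T. prob {\<omega> \<in> space M. X T \<omega> / a T \<ge> (1 - \<epsilon>) * c}) \<longlonglongrightarrow> 1"
  shows "ereal c \<le> liminf (\<lambda>T. ereal (expectation (X T) / a T))"
  unfolding le_Liminf_iff
proof (intro allI impI)
  fix y assume "y < ereal c"
  show "\<forall>\<^sub>F T in sequentially. y < ereal (expectation (X T) / a T)"
  proof (cases y)
    case (real y')
    define q where "q = max 0 (y' / c)"
    define \<epsilon> where "\<epsilon> = (1 - q) / 4"
    have "0 \<le> q" "y' / c \<le> q" unfolding q_def by simp_all
    moreover have "q < 1" using \<open>y < ereal c\<close> c real by (simp add: q_def)
    ultimately have q: "0 \<le> q" "q < 1" "y' \<le> q * c" using c by (simp_all add: divide_le_eq)
    have \<epsilon>: "0 < \<epsilon>" "\<epsilon> < 1" unfolding \<epsilon>_def using q by auto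
    have "q < (1 + q) / 2" using q(2) by (simp add: field_simps)
    also have "\<dots> \<le> (1 + q) / 2 + \<epsilon> * \<epsilon>" by simp
    also have "\<dots> = (1 - \<epsilon>) * (1 - \<epsilon>)" unfolding \<epsilon>_def by (simp add: field_simps)
    finally have "q < (1 - \<epsilon>) * (1 - \<epsilon>)" .
    from mult_strict_right_mono[OF this c] have y'_less: "y' < (1 - \<epsilon>) * (1 - \<epsilon>) * c"
      using q(3) by linarith
    define A where "A T = {\<omega> \<in> space M. X T \<omega> / a T \<ge> (1 - \<epsilon>) * c}" for T
    have "\<forall>\<^sub>F T in sequentially. 1 - \<epsilon> < prob (A T)"
      using order_tendstoD(1)[OF tendsto[OF \<epsilon>]] \<epsilon> unfolding A_def by simp
    with a show ?thesis
    proof eventually_elim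
      case (elim T)
      have "A T = {\<omega> \<in> space M. X T \<omega> \<ge> (1 - \<epsilon>) * c * a T}"
        using elim(1) unfolding A_def by (auto simp: pos_le_divide_eq)
      then have "prob (A T) \<le> expectation (X T) / ((1 - \<epsilon>) * c * a T)"
        using integrable nonneg \<epsilon> c elim(1) by (auto intro: integral_Markov_inequality_measure)
      then have "(1 - \<epsilon>) * c * prob (A T) \<le> expectation (X T) / a T"
        using \<epsilon> c elim(1) by (simp add: field_simps)
      moreover have "(1 - \<epsilon>) * (1 - \<epsilon>) * c \<le> (1 - \<epsilon>) * c * prob (A T)"
        using elim(2) \<epsilon> c by (simp add: mult_ac mult_left_mono)
      ultimately show ?case using y'_less real by simp
    qed
  qed (use \<open>y < ereal c\<close> in auto)
qed


locale bandit_under_attack = prob_space M for M :: "'w measure" +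
  fixes K n Ssz :: nat
    and \<mu> :: "nat \<Rightarrow> real"
    and \<alpha> \<beta> :: real
    and Shat :: "nat \<Rightarrow> nat set"
    and U1 L1 :: "nat \<Rightarrow> nat"
    and Z :: "src \<Rightarrow> 'w \<Rightarrow> nat"
    and I :: "nat \<Rightarrow> nat \<Rightarrow> 'w \<Rightarrow> nat"
    and B U L :: "nat \<Rightarrow> nat \<Rightarrow> 'w \<Rightarrow> nat"
    and i :: nat
    and S :: "nat \<Rightarrow> nat \<Rightarrow> 'w \<Rightarrow> nat set"
    and R :: "nat \<Rightarrow> nat \<Rightarrow> 'w \<Rightarrow> nat"
  assumes S_def: "S = (\<lambda>a j \<omega>. Shat a \<union> {U a j \<omega>, L a j \<omega>})"
    and R_def: "R = (\<lambda>a j \<omega>. if Z (Hsel a j) \<omega> \<le> n then B (Z (Hsel a j) \<omega>) j \<omega>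
                      else Z (Mal a j) \<omega>)"
    and K: "2 \<le> K" and n: "1 \<le> n"
    and mu_range: "\<forall>k \<in> {1..K}. 0 < \<mu> k \<and> \<mu> k < 1"
    and mu_gap: "\<mu> 1 > \<mu> 2"
    and mu_sorted: "\<forall>k. 2 \<le> k \<and> k < K \<longrightarrow> \<mu> (k + 1) \<le> \<mu> k"
    and alpha: "\<alpha> > 1" and beta: "\<beta> > 1"
    and Shat: "\<forall>a \<in> {1..n}. Shat a \<subseteq> {1..K} \<and> card (Shat a) = Ssz"
    and UL1: "\<forall>a \<in> {1..n}. U1 a \<in> {1..K} - Shat a \<and> L1 a \<in> {1..K} - Shat a \<and> U1 a \<noteq> L1 a"
    and indep: "indep_vars (\<lambda>_. count_space UNIV) Z (src_idx n K)"
    and rew_distr: "\<forall>a \<in> {1..n}. \<forall>k \<in> {1..K}. \<forall>r \<ge> 1.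
        distr M (count_space UNIV) (Z (Rew a k r)) = measure_pmf (bern01 (\<mu> k))"
    and H_distr: "\<forall>a \<in> {1..n}. \<forall>j \<ge> 1.
        distr M (count_space UNIV) (Z (Hsel a j)) = measure_pmf (pmf_of_set ({1..n+1} - {a}))"
    and mal_distr: "\<forall>a \<in> {1..n}. \<forall>j \<ge> 1.
        distr M (count_space UNIV) (Z (Mal a j)) = measure_pmf (pmf_of_set {1..K})"
    and I_meas: "\<forall>a t. I a t \<in> measurable M (count_space UNIV)"
    and I_ucb: "\<forall>a \<in> {1..n}. \<forall>t \<ge> 1. \<forall>\<omega> \<in> space M.
        I a t \<omega> \<in> S a (phase_of \<beta> t) \<omega> \<and>
        (\<forall>k \<in> S a (phase_of \<beta> t) \<omega>. ucb \<alpha> Z I a k t \<omega> \<le> ucb \<alpha> Z I a (I a t \<omega>) t \<omega>)"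
    and B_def: "\<forall>a \<in> {1..n}. \<forall>j \<ge> 1. \<forall>\<omega> \<in> space M.
        B a j \<omega> \<in> S a j \<omega> \<and>
        (\<forall>k \<in> S a j \<omega>. phase_plays \<beta> I a k j \<omega> \<le> phase_plays \<beta> I a (B a j \<omega>) j \<omega>)"
    and UL_init: "\<forall>a \<in> {1..n}. \<forall>\<omega> \<in> space M. U a 1 \<omega> = U1 a \<and> L a 1 \<omega> = L1 a"
    and UL_step: "\<forall>a \<in> {1..n}. \<forall>j \<ge> 1. \<forall>\<omega> \<in> space M.
        (R a j \<omega> \<in> S a j \<omega> \<longrightarrow> U a (j+1) \<omega> = U a j \<omega> \<and> L a (j+1) \<omega> = L a j \<omega>) \<and>
        (R a j \<omega> \<notin> S a j \<omega> \<longrightarrow>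
           U a (j+1) \<omega> \<in> {U a j \<omega>, L a j \<omega>} \<and>
           (\<forall>k \<in> {U a j \<omega>, L a j \<omega>}. phase_plays \<beta> I a k j \<omega> \<le> phase_plays \<beta> I a (U a (j+1) \<omega>) j \<omega>) \<and>
           L a (j+1) \<omega> = R a j \<omega>)"
    and i: "i \<in> {1..n}"
begin

lemma mu_le_mu2: "k \<in> {2..K} \<Longrightarrow> \<mu> k \<le> \<mu> 2"
proof (induction k)
  case (Suc k)
  show ?case
  proof (cases "Suc k = 2")
    case False
    then have "k \<in> {2..K}" "k < K" using Suc.prems by auto
    then show ?thesis using Suc.IH mu_sorted by force
  qed (simp add: numeral_2_eq_2)
qed simp

lemma mu_le_mu1: "k \<in> {1..K} \<Longrightarrow> \<mu> k \<le> \<mu> 1"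
  using mu_le_mu2[of k] mu_gap by (cases "k = 1") auto

lemma gap_pos: "k \<in> {2..K} \<Longrightarrow> 0 < \<mu> 1 - \<mu> k"
  using mu_le_mu2[of k] mu_gap by simp

lemma
  shows Rew_in_src_idx: "a \<in> {1..n} \<Longrightarrow> k \<in> {1..K} \<Longrightarrow> 1 \<le> r \<Longrightarrow> Rew a k r \<in> src_idx n K"
    and Hsel_in_src_idx: "a \<in> {1..n} \<Longrightarrow> 1 \<le> j \<Longrightarrow> Hsel a j \<in> src_idx n K"
    and Mal_in_src_idx: "a \<in> {1..n} \<Longrightarrow> 1 \<le> j \<Longrightarrow> Mal a j \<in> src_idx n K"
  unfolding src_idx_def by auto

lemma measurable_source: "s \<in> src_idx n K \<Longrightarrow> Z s \<in> measurable M (count_space UNIV)"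
  using indep unfolding indep_vars_def by auto

lemma prob_source_in:
  assumes "s \<in> src_idx n K" "distr M (count_space UNIV) (Z s) = measure_pmf p"
  shows "prob {\<omega> \<in> space M. Z s \<omega> \<in> A} = measure_pmf.prob p A"
proof -
  have "prob {\<omega> \<in> space M. Z s \<omega> \<in> A} = measure (distr M (count_space UNIV) (Z s)) A"
    using measurable_source[OF assms(1)]
    by (subst measure_distr) (auto simp: vimage_def Int_def conj_commute)
  then show ?thesis using assms(2) by simp
qed

lemma AE_source_in_set_pmf:
  assumes "s \<in> src_idx n K" "distr M (count_space UNIV) (Z s) = measure_pmf p"
  shows "AE \<omega> in M. Z s \<omega> \<in> set_pmf p"
proof -
  have "AE x in distr M (count_space UNIV) (Z s). x \<in> set_pmf p"
    unfolding assms(2) by (simp add: AE_measure_pmf)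
  then show ?thesis using measurable_source[OF assms(1)] by (subst (asm) AE_distr_iff) auto
qed

definition valid_sources :: "'w \<Rightarrow> bool" where
  "valid_sources \<omega> \<longleftrightarrow> (\<forall>a \<in> {1..n}. \<forall>j \<ge> 1.
     Z (Hsel a j) \<omega> \<in> {1..n+1} - {a} \<and> Z (Mal a j) \<omega> \<in> {1..K})"

lemma AE_valid_sources: "AE \<omega> in M. valid_sources \<omega>"
  unfolding valid_sources_def
proof (subst AE_ball_countable, simp, intro ballI, subst AE_all_countable, intro allI)
  fix a j :: nat assume a: "a \<in> {1..n}"
  show "AE \<omega> in M. 1 \<le> j \<longrightarrow> Z (Hsel a j) \<omega> \<in> {1..n+1} - {a} \<and> Z (Mal a j) \<omega> \<in> {1..K}"
  proof (cases "1 \<le> j")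
    case True
    have "n + 1 \<in> {1..n+1} - {a}" using a by auto
    then have agents: "finite ({1..n+1} - {a})" "{1..n+1} - {a} \<noteq> {}" by blast+
    have "AE \<omega> in M. Z (Hsel a j) \<omega> \<in> set_pmf (pmf_of_set ({1..n+1} - {a}))"
      using AE_source_in_set_pmf[OF Hsel_in_src_idx[OF a True]] H_distr a True by auto
    moreover have "AE \<omega> in M. Z (Mal a j) \<omega> \<in> set_pmf (pmf_of_set {1..K})"
      using AE_source_in_set_pmf[OF Mal_in_src_idx[OF a True]] mal_distr a True by auto
    ultimately show ?thesis by eventually_elim (use agents K in auto)
  qed simp
qed

lemma active_arms_in_range:
  assumes "\<omega> \<in> space M" "valid_sources \<omega>" "1 \<le> j" "a \<in> {1..n}"
  shows "S a j \<omega> \<subseteq> {1..K}"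
proof -
  have "\<forall>a \<in> {1..n}. U a j \<omega> \<in> {1..K} \<and> L a j \<omega> \<in> {1..K}"
    using assms(3)
  proof (induction j rule: dec_induct)
    case base
    then show ?case using UL_init UL1 assms(1) by auto
  next
    case (step j)
    have S_range: "S b j \<omega> \<subseteq> {1..K}" if "b \<in> {1..n}" for b
      using step.IH Shat that unfolding S_def by auto
    show ?case
    proof
      fix a assume a: "a \<in> {1..n}"
      have "R a j \<omega> \<in> {1..K}"
      proof (cases "Z (Hsel a j) \<omega> \<le> n")
        case True
        then have b: "Z (Hsel a j) \<omega> \<in> {1..n}"
          using assms(2) a step.hyps unfolding valid_sources_def by fastforce
        then have "B (Z (Hsel a j) \<omega>) j \<omega> \<in> S (Z (Hsel a j) \<omega>) j \<omega>"
          using B_def step.hyps assms(1) by auto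
        then show ?thesis using True S_range[OF b] unfolding R_def by auto
      next
        case False
        then show ?thesis using assms(2) a step.hyps unfolding valid_sources_def R_def by auto
      qed
      then show "U a (Suc j) \<omega> \<in> {1..K} \<and> L a (Suc j) \<omega> \<in> {1..K}"
        using UL_step[rule_format, OF a step.hyps(1) assms(1)] step.IH a
        by (cases "R a j \<omega> \<in> S a j \<omega>") auto
    qed
  qed
  then show ?thesis using Shat assms(4) unfolding S_def by auto
qed

lemma pulled_arm_in_range:
  assumes "\<omega> \<in> space M" "valid_sources \<omega>" "a \<in> {1..n}" "1 \<le> t"
  shows "I a t \<omega> \<in> {1..K}"
proof -
  have "I a t \<omega> \<in> S a (phase_of \<beta> t) \<omega>" using I_ucb assms(1,3,4) by blast
  moreover have "1 \<le> phase_of \<beta> t" using phase_of_ge_1 beta assms(4) by simp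
  ultimately show ?thesis using active_arms_in_range[OF assms(1,2) _ assms(3)] by blast
qed

lemma
  assumes "\<omega> \<in> space M" "valid_sources \<omega>"
  shows regret_nonneg: "0 \<le> regret \<mu> I i T \<omega>"
    and regret_le: "regret \<mu> I i T \<omega> \<le> real T"
proof -
  have gap: "0 \<le> \<mu> 1 - \<mu> (I i t \<omega>) \<and> \<mu> 1 - \<mu> (I i t \<omega>) \<le> 1" if "t \<in> {1..T}" for t
  proof -
    have arm: "I i t \<omega> \<in> {1..K}" using pulled_arm_in_range[OF assms i] that by auto
    then show ?thesis
      using mu_range[rule_format, OF arm] mu_range[rule_format, of 1] mu_le_mu1[OF arm] K by auto
  qed
  show "0 \<le> regret \<mu> I i T \<omega>" unfolding regret_def using gap by (intro sum_nonneg) auto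
  have "regret \<mu> I i T \<omega> \<le> (\<Sum>t = 1..T. 1)" unfolding regret_def using gap by (intro sum_mono) auto
  then show "regret \<mu> I i T \<omega> \<le> real T" by simp
qed

lemma borel_measurable_regret: "regret \<mu> I i T \<in> borel_measurable M"
proof -
  have "(\<lambda>\<omega>. \<mu> (I i t \<omega>)) \<in> borel_measurable M" for t
    using measurable_compose[OF I_meas[rule_format], of \<mu> borel] by simp
  then show ?thesis unfolding regret_def[abs_def] by measurable
qed


subsection \<open>Concentration of rewards\<close>

text \<open>Indexing by the number \<open>m\<close> of pulls instead of by time makes these averages of i.i.d.
  rewards, so Hoeffding applies for each fixed \<open>m\<close>, and a union bound over \<open>m\<close> handles the
  random number of pulls in \<open>muhat\<close>.\<close>
definition reward_avg :: "nat \<Rightarrow> nat \<Rightarrow> nat \<Rightarrow> 'w \<Rightarrow> real" where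
  "reward_avg a k m \<omega> = (\<Sum>r = 1..m. real (Z (Rew a k r) \<omega>)) / real m"

lemma muhat_eq_reward_avg: "muhat Z I a k t \<omega> = reward_avg a k (pulls I a k t \<omega>) \<omega>"
  unfolding muhat_def reward_avg_def by simp

lemma borel_measurable_reward_avg [measurable]:
  assumes "a \<in> {1..n}" "k \<in> {1..K}"
  shows "reward_avg a k m \<in> borel_measurable M"
proof -
  have "(\<lambda>\<omega>. real (Z (Rew a k r) \<omega>)) \<in> borel_measurable M" if "r \<in> {1..m}" for r
    using that by (intro measurable_compose[OF measurable_source]) (auto intro: Rew_in_src_idx assms)
  then have "(\<lambda>\<omega>. \<Sum>r = 1..m. real (Z (Rew a k r) \<omega>)) \<in> borel_measurable M"
    by (rule borel_measurable_sum)
  then show ?thesis unfolding reward_avg_def[abs_def] by (rule borel_measurable_divide) simp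
qed

lemma
  assumes a: "a \<in> {1..n}" and k: "k \<in> {1..K}" and m: "1 \<le> m" and d: "0 \<le> d"
  shows prob_reward_avg_le: "prob {\<omega> \<in> space M. reward_avg a k m \<omega> \<le> \<mu> k - d} \<le> exp (-2 * real m * d\<^sup>2)"
    and prob_reward_avg_ge: "prob {\<omega> \<in> space M. \<mu> k + d \<le> reward_avg a k m \<omega>} \<le> exp (-2 * real m * d\<^sup>2)"
proof -
  define J where "J = Rew a k ` {1..m}"
  define X where "X = (\<lambda>s \<omega>. real (Z s \<omega>))"
  have J_idx: "J \<subseteq> src_idx n K" unfolding J_def using Rew_in_src_idx[OF a k] by auto
  have distr_J: "distr M (count_space UNIV) (Z s) = measure_pmf (bern01 (\<mu> k))" if "s \<in> J" for s
    using that rew_distr a k unfolding J_def by auto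
  have first: "Rew a k 1 \<in> J" unfolding J_def using m by auto
  have X_meas: "X s \<in> borel_measurable M" if "s \<in> J" for s
    unfolding X_def using J_idx that by (intro measurable_compose[OF measurable_source]) auto
  have distr_X: "distr M borel (X s) = distr (measure_pmf (bern01 (\<mu> k))) borel real" if "s \<in> J" for s
  proof -
    have "distr M borel (X s) = distr (distr M (count_space UNIV) (Z s)) borel real"
      unfolding X_def using measurable_source J_idx that by (subst distr_distr) (auto simp: comp_def)
    then show ?thesis using distr_J[OF that] by simp
  qed
  have mean: "expectation (X (Rew a k 1)) = \<mu> k"
  proof -
    have "expectation (X (Rew a k 1)) = integral\<^sup>L (distr M (count_space UNIV) (Z (Rew a k 1))) real"
      unfolding X_def using measurable_source J_idx first by (subst integral_distr) auto
    then show ?thesis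
      using distr_J[OF first] mu_range k unfolding bern01_def by fastforce
  qed
  have range: "AE \<omega> in M. X (Rew a k 1) \<omega> \<in> {0..1}"
  proof -
    have "AE \<omega> in M. Z (Rew a k 1) \<omega> \<in> set_pmf (bern01 (\<mu> k))"
      using AE_source_in_set_pmf[OF _ distr_J[OF first]] J_idx first by auto
    then show ?thesis unfolding X_def bern01_def by eventually_elim auto
  qed
  interpret H: Hoeffding_ineq_iid M J X "X (Rew a k 1)" 0 1 "expectation (X (Rew a k 1))"
  proof unfold_locales
    show "indep_vars (\<lambda>_. borel) X J"
      unfolding X_def by (rule indep_vars_compose2[OF indep_vars_subset[OF indep J_idx]]) simp
    show "distr M borel (X s) = distr M borel (X (Rew a k 1))" if "s \<in> J" for s
      using distr_X that first by simp
  qed (use X_meas first range in \<open>auto simp: J_def\<close>)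
  have card_J: "card J = m" unfolding J_def by (simp add: card_image inj_on_def)
  have sum_J: "(\<Sum>s \<in> J. X s \<omega>) = (\<Sum>r = 1..m. real (Z (Rew a k r) \<omega>))" for \<omega>
    unfolding J_def X_def by (subst sum.reindex) (auto simp: inj_on_def)
  show "prob {\<omega> \<in> space M. reward_avg a k m \<omega> \<le> \<mu> k - d} \<le> exp (-2 * real m * d\<^sup>2)"
    using H.Hoeffding_ineq_le'[OF d] first unfolding card_J sum_J mean reward_avg_def by auto
  show "prob {\<omega> \<in> space M. \<mu> k + d \<le> reward_avg a k m \<omega>} \<le> exp (-2 * real m * d\<^sup>2)"
    using H.Hoeffding_ineq_ge'[OF d] first unfolding card_J sum_J mean reward_avg_def by auto
qed

lemma prob_reward_avg_below_radius:
  assumes k: "k \<in> {1..K}" and T: "1 \<le> T"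
  shows "prob {\<omega> \<in> space M. \<exists>m \<in> {1..T}. reward_avg i k m \<omega> \<le> \<mu> k - sqrt (ln T / m)} \<le> 1 / T"
proof -
  have "prob {\<omega> \<in> space M. \<exists>m \<in> {1..T}. reward_avg i k m \<omega> \<le> \<mu> k - sqrt (ln T / m)}
      = prob (\<Union>m \<in> {1..T}. {\<omega> \<in> space M. reward_avg i k m \<omega> \<le> \<mu> k - sqrt (ln T / m)})"
    by (rule arg_cong[of _ _ prob]) auto
  also have "\<dots> \<le> (\<Sum>m = 1..T. prob {\<omega> \<in> space M. reward_avg i k m \<omega> \<le> \<mu> k - sqrt (ln T / m)})"
    using i k by (intro measure_UNION_le) auto
  also have "\<dots> \<le> (\<Sum>m = 1..T. 1 / (real T)\<^sup>2)"
  proof (rule sum_mono)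
    fix m assume m: "m \<in> {1..T}"
    have "real m * (sqrt (ln T / m))\<^sup>2 = ln T" using m T by simp
    then have "-2 * real m * (sqrt (ln T / m))\<^sup>2 = -2 * ln T" by (simp add: mult.assoc)
    then have "exp (-2 * real m * (sqrt (ln T / m))\<^sup>2) = 1 / (real T)\<^sup>2"
      using exp_neg_2_ln[of "real T"] T by simp
    then show "prob {\<omega> \<in> space M. reward_avg i k m \<omega> \<le> \<mu> k - sqrt (ln T / m)} \<le> 1 / (real T)\<^sup>2"
      using prob_reward_avg_le[OF i k, of m "sqrt (ln T / m)"] m T by simp
  qed
  also have "\<dots> = 1 / T" using T by (simp add: power2_eq_square)
  finally show ?thesis .
qed

lemma prob_reward_avg_above_slack:
  assumes a: "a \<in> {1..K}" and T: "1 \<le> T" and N: "1 \<le> N" "\<alpha> * ln T \<le> N * (\<eta> / 2)\<^sup>2"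
    and "0 < \<eta>"
  shows "prob {\<omega> \<in> space M. \<exists>m \<in> {N..T}. \<mu> a + \<eta> / 2 \<le> reward_avg i a m \<omega>} \<le> 1 / T"
proof -
  have "prob {\<omega> \<in> space M. \<exists>m \<in> {N..T}. \<mu> a + \<eta> / 2 \<le> reward_avg i a m \<omega>}
      = prob (\<Union>m \<in> {N..T}. {\<omega> \<in> space M. \<mu> a + \<eta> / 2 \<le> reward_avg i a m \<omega>})"
    by (rule arg_cong[of _ _ prob]) auto
  also have "\<dots> \<le> (\<Sum>m = N..T. prob {\<omega> \<in> space M. \<mu> a + \<eta> / 2 \<le> reward_avg i a m \<omega>})"
    using i a by (intro measure_UNION_le) auto
  also have "\<dots> \<le> (\<Sum>m = N..T. 1 / (real T)\<^sup>2)"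
  proof (rule sum_mono)
    fix m assume m: "m \<in> {N..T}"
    have "ln T \<le> \<alpha> * ln T" using alpha T by (simp add: mult_le_cancel_right1)
    also have "\<dots> \<le> m * (\<eta> / 2)\<^sup>2"
      using N(2) m by (smt (verit) atLeastAtMost_iff mult_right_mono of_nat_mono zero_le_power2)
    finally have "exp (-2 * real m * (\<eta> / 2)\<^sup>2) \<le> exp (-2 * ln T)" by simp
    also have "\<dots> = 1 / (real T)\<^sup>2" using exp_neg_2_ln[of "real T"] T by simp
    finally show "prob {\<omega> \<in> space M. \<mu> a + \<eta> / 2 \<le> reward_avg i a m \<omega>} \<le> 1 / (real T)\<^sup>2"
      using prob_reward_avg_ge[OF i a, of m "\<eta> / 2"] m N \<open>0 < \<eta>\<close> by simp
  qed
  also have "\<dots> \<le> real T * (1 / (real T)\<^sup>2)"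
  proof -
    have "real (Suc T - N) \<le> real T" using N by simp
    then show ?thesis by (simp add: divide_right_mono)
  qed
  also have "\<dots> = 1 / T" using T by (simp add: power2_eq_square)
  finally show ?thesis .
qed


subsection \<open>Recommendations of the malicious agent\<close>

definition attacked :: "nat \<Rightarrow> nat \<Rightarrow> 'w \<Rightarrow> bool" where
  "attacked k j \<omega> \<longleftrightarrow> Z (Hsel i j) \<omega> = n + 1 \<and> Z (Mal i j) \<omega> = k"

lemma attacked_imp_active:
  assumes "\<omega> \<in> space M" "1 \<le> j" "attacked k j \<omega>"
  shows "k \<in> S i (Suc j) \<omega>"
proof -
  have "R i j \<omega> = k" using assms(3) unfolding attacked_def R_def by simp
  then show ?thesis
    using UL_step[rule_format, OF i assms(2,1)] unfolding S_def
    by (cases "k \<in> Shat i \<union> {U i j \<omega>, L i j \<omega>}") auto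
qed

lemma attacked_event: "1 \<le> j \<Longrightarrow> {\<omega> \<in> space M. attacked k j \<omega>} \<in> events"
  using measurable_source[OF Hsel_in_src_idx[OF i]] measurable_source[OF Mal_in_src_idx[OF i]]
  unfolding attacked_def by measurable

lemma prob_attacked:
  assumes j: "1 \<le> j" and k: "k \<in> {1..K}"
  shows "prob {\<omega> \<in> space M. attacked k j \<omega>} = 1 / (real n * real K)"
proof -
  define A where "A = (\<lambda>s. if s = Hsel i j then {n + 1} else {k})"
  have contact: "prob {\<omega> \<in> space M. Z (Hsel i j) \<omega> \<in> {n + 1}} = 1 / n"
  proof -
    have "n + 1 \<in> {1..n+1} - {i}" using i by auto
    then have "{1..n+1} - {i} \<noteq> {}" "({1..n+1} - {i}) \<inter> {n + 1} = {n + 1}" by blast+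
    moreover have "card ({1..n+1} - {i}) = n" using i by simp
    moreover have "prob {\<omega> \<in> space M. Z (Hsel i j) \<omega> \<in> {n + 1}} =
        measure_pmf.prob (pmf_of_set ({1..n+1} - {i})) {n + 1}"
      using H_distr i j by (intro prob_source_in[OF Hsel_in_src_idx[OF i j]]) auto
    ultimately show ?thesis by (simp add: measure_pmf_of_set)
  qed
  have recommend: "prob {\<omega> \<in> space M. Z (Mal i j) \<omega> \<in> {k}} = 1 / K"
  proof -
    have "{1..K} \<noteq> {}" "{1..K} \<inter> {k} = {k}" using k by auto
    moreover have "prob {\<omega> \<in> space M. Z (Mal i j) \<omega> \<in> {k}} = measure_pmf.prob (pmf_of_set {1..K}) {k}"
      using mal_distr i j by (intro prob_source_in[OF Mal_in_src_idx[OF i j]]) auto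
    ultimately show ?thesis by (simp add: measure_pmf_of_set)
  qed
  have "prob (\<Inter>s \<in> {Hsel i j, Mal i j}. Z s -` A s \<inter> space M) =
      (\<Prod>s \<in> {Hsel i j, Mal i j}. prob (Z s -` A s \<inter> space M))"
    using Hsel_in_src_idx[OF i j] Mal_in_src_idx[OF i j] by (intro indep_varsD[OF indep]) auto
  moreover have "(\<Inter>s \<in> {Hsel i j, Mal i j}. Z s -` A s \<inter> space M) = {\<omega> \<in> space M. attacked k j \<omega>}"
    unfolding A_def attacked_def by auto
  moreover have "Z (Hsel i j) -` A (Hsel i j) \<inter> space M = {\<omega> \<in> space M. Z (Hsel i j) \<omega> \<in> {n + 1}}"
    "Z (Mal i j) -` A (Mal i j) \<inter> space M = {\<omega> \<in> space M. Z (Mal i j) \<omega> \<in> {k}}"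
    unfolding A_def by auto
  ultimately show ?thesis using contact recommend by simp
qed

lemma prob_never_attacked:
  assumes k: "k \<in> {1..K}" and W: "finite W" "\<forall>j \<in> W. 1 \<le> j"
  shows "prob {\<omega> \<in> space M. \<forall>j \<in> W. \<not> attacked k j \<omega>} = (1 - 1 / (real n * real K)) ^ card W"
proof (cases "W = {}")
  case False
  define srcs where "srcs = (\<lambda>j. {Hsel i j, Mal i j})"
  define N where "N = (\<lambda>j::nat. Pi\<^sub>M (srcs j) (\<lambda>_. count_space (UNIV :: nat set)))"
  define Y where "Y = (\<lambda>j \<omega>. restrict (\<lambda>s. Z s \<omega>) (srcs j))"
  define A where "A = (\<lambda>j. {f \<in> space (N j). \<not> (f (Hsel i j) = n + 1 \<and> f (Mal i j) = k)})"
  have "indep_vars N Y W"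
    unfolding N_def Y_def
  proof (rule indep_vars_restrict[OF indep])
    show "srcs j \<subseteq> src_idx n K" if "j \<in> W" for j
      unfolding srcs_def using that W Hsel_in_src_idx[OF i] Mal_in_src_idx[OF i] by auto
    show "disjoint_family_on srcs W" unfolding srcs_def disjoint_family_on_def by auto
  qed
  moreover have "A j \<in> sets (N j)" for j
  proof -
    have "Hsel i j \<in> srcs j" "Mal i j \<in> srcs j" unfolding srcs_def by auto
    then show ?thesis unfolding A_def N_def by measurable
  qed
  ultimately have "prob (\<Inter>j \<in> W. Y j -` A j \<inter> space M) = (\<Prod>j \<in> W. prob (Y j -` A j \<inter> space M))"
    using False W(1) by (intro indep_varsD) auto
  moreover have "(\<Inter>j \<in> W. Y j -` A j \<inter> space M) = {\<omega> \<in> space M. \<forall>j \<in> W. \<not> attacked k j \<omega>}"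
    using False unfolding A_def Y_def N_def srcs_def attacked_def by (auto simp: space_PiM)
  moreover have "prob (Y j -` A j \<inter> space M) = 1 - 1 / (real n * real K)" if "j \<in> W" for j
  proof -
    have "Y j -` A j \<inter> space M = space M - {\<omega> \<in> space M. attacked k j \<omega>}"
      unfolding A_def Y_def N_def srcs_def attacked_def by (auto simp: space_PiM)
    then show ?thesis
      using prob_attacked[OF _ k] attacked_event W that by (simp add: prob_compl)
  qed
  ultimately show ?thesis by simp
qed (simp add: prob_space)


subsection \<open>Pulls of suboptimal arms\<close>

definition lower_confident :: "nat \<Rightarrow> nat \<Rightarrow> 'w \<Rightarrow> bool" where
  "lower_confident k T \<omega> \<longleftrightarrow> (\<forall>m \<in> {1..T}. \<mu> k - sqrt (ln T / m) < reward_avg i k m \<omega>)"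

definition upper_confident :: "real \<Rightarrow> nat \<Rightarrow> nat \<Rightarrow> nat \<Rightarrow> 'w \<Rightarrow> bool" where
  "upper_confident \<eta> N a T \<omega> \<longleftrightarrow> (\<forall>m \<in> {N..T}. reward_avg i a m \<omega> < \<mu> a + \<eta> / 2)"

text \<open>Pigeonhole: by \<open>card_pulls_below\<close>, at most \<open>K N\<close> times pull an arm with fewer than \<open>N\<close>
  earlier pulls.\<close>
lemma exists_time_pulling_explored_arm:
  assumes \<omega>: "\<omega> \<in> space M" "valid_sources \<omega>" and T: "phase_end \<beta> (Suc j) \<le> T"
    and long: "real (pulls I i k T \<omega>) + real K * real N < real (phase_end \<beta> (Suc j) - phase_end \<beta> j)"
  obtains t where "t \<in> {phase_end \<beta> j + 1 .. phase_end \<beta> (Suc j)}" "I i t \<omega> \<noteq> k"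
    "N \<le> pulls I i (I i t \<omega>) (t - 1) \<omega>"
proof (rule ccontr)
  assume "\<not> thesis"
  with that have none: "\<forall>t \<in> {phase_end \<beta> j + 1 .. phase_end \<beta> (Suc j)}.
      I i t \<omega> = k \<or> pulls I i (I i t \<omega>) (t - 1) \<omega> < N"
    by force
  let ?phase = "{phase_end \<beta> j + 1 .. phase_end \<beta> (Suc j)}"
  let ?k = "{t \<in> {1..T}. I i t \<omega> = k}"
  let ?below = "\<lambda>a. {t \<in> {1..T}. I i t \<omega> = a \<and> pulls I i a (t - 1) \<omega> < N}"
  have "?phase \<subseteq> ?k \<union> (\<Union>a \<in> {1..K}. ?below a)"
  proof
    fix t assume t: "t \<in> ?phase"
    then have "1 \<le> t" "t \<le> T" using T by auto
    then show "t \<in> ?k \<union> (\<Union>a \<in> {1..K}. ?below a)"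
      using none t pulled_arm_in_range[OF \<omega> i] by auto
  qed
  then have "card ?phase \<le> card (?k \<union> (\<Union>a \<in> {1..K}. ?below a))" by (intro card_mono) auto
  also have "\<dots> \<le> card ?k + card (\<Union>a \<in> {1..K}. ?below a)" by (rule card_Un_le)
  also have "card (\<Union>a \<in> {1..K}. ?below a) \<le> (\<Sum>a = 1..K. card (?below a))" by (rule card_UN_le) simp
  also have "\<dots> \<le> (\<Sum>a = 1..K. N)" by (intro sum_mono card_pulls_below)
  finally have "card ?phase \<le> pulls I i k T \<omega> + K * N" by (simp add: pulls_def)
  then have "real (card ?phase) \<le> real (pulls I i k T \<omega>) + real K * real N"
    by (simp only: of_nat_add[symmetric] of_nat_mult[symmetric] of_nat_le_iff)
  then show False using long by simp
qed

lemma ucb_explored_arm_less: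
  assumes \<omega>: "\<omega> \<in> space M" "valid_sources \<omega>" and a: "a \<in> {1..K}" and t: "1 \<le> t" "t \<le> T"
    and explored: "N \<le> pulls I i a (t - 1) \<omega>"
    and up: "upper_confident \<eta> N a T \<omega>"
    and N: "1 \<le> N" "\<alpha> * ln T \<le> N * (\<eta> / 2)\<^sup>2" and \<eta>: "0 < \<eta>"
  shows "ucb \<alpha> Z I i a t \<omega> < ereal (\<mu> 1 + \<eta>)"
proof -
  define m where "m = pulls I i a (t - 1) \<omega>"
  have m: "N \<le> m" "m \<le> T" using explored pulls_le[of I i a "t - 1" \<omega>] t unfolding m_def by auto
  have "reward_avg i a m \<omega> < \<mu> a + \<eta> / 2" using up m unfolding upper_confident_def by simp
  then have "reward_avg i a m \<omega> < \<mu> 1 + \<eta> / 2" using mu_le_mu1[OF a] by linarith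
  moreover have "sqrt (\<alpha> * ln t / m) \<le> \<eta> / 2"
  proof -
    have "\<alpha> * ln t / m \<le> \<alpha> * ln T / N"
      using alpha t m N by (intro frac_le mult_left_mono) auto
    also have "\<dots> \<le> (\<eta> / 2)\<^sup>2" using N by (simp add: divide_le_eq mult.commute)
    finally show ?thesis using \<eta> by (intro real_le_lsqrt) auto
  qed
  ultimately show ?thesis using m N unfolding ucb_def muhat_eq_reward_avg m_def by auto
qed

text \<open>Arm \<open>k\<close> is active in phase \<open>j + 1\<close>. At a time \<open>t\<close> of that phase pulling a well-explored
  arm, the index of \<open>k\<close> is at least \<open>\<mu>\<^sub>k + (sqrt (\<alpha> l) - 1) sqrt (ln T / T\<^sub>k)\<close> while the pulled
  index is below \<open>\<mu>\<^sub>1 + \<eta>\<close>; the slack condition makes this impossible when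
  \<open>T\<^sub>k < c ln T / \<Delta>\<^sup>2\<close>.\<close>
lemma pulls_ge_if_attacked:
  fixes c l \<eta> :: real and k :: nat
  defines "\<Delta> \<equiv> \<mu> 1 - \<mu> k"
  assumes \<omega>: "\<omega> \<in> space M" "valid_sources \<omega>"
    and k: "k \<in> {2..K}" and j: "1 \<le> j" and attacked: "attacked k j \<omega>"
    and T: "phase_end \<beta> (Suc j) \<le> T"
    and low: "lower_confident k T \<omega>"
    and up: "\<forall>a \<in> {1..K}. upper_confident \<eta> N a T \<omega>"
    and N: "1 \<le> N" "\<alpha> * ln T \<le> N * (\<eta> / 2)\<^sup>2"
    and late: "\<forall>t. phase_end \<beta> j < t \<longrightarrow> l * ln T \<le> ln t"
    and long: "c * ln T / \<Delta>\<^sup>2 + real K * real N < real (phase_end \<beta> (Suc j) - phase_end \<beta> j)"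
    and slack: "sqrt c * (\<Delta> + \<eta>) \<le> (sqrt (\<alpha> * l) - 1) * \<Delta>"
    and l: "1 < sqrt (\<alpha> * l)" "0 \<le> l" and c: "0 < c" and \<eta>: "0 < \<eta>"
  shows "c * ln T / \<Delta>\<^sup>2 \<le> pulls I i k T \<omega>"
proof (rule ccontr)
  have \<Delta>: "0 < \<Delta>" unfolding \<Delta>_def using gap_pos[OF k] .
  assume "\<not> ?thesis"
  then have few: "pulls I i k T \<omega> < c * ln T / \<Delta>\<^sup>2" by simp
  obtain t where t: "t \<in> {phase_end \<beta> j + 1 .. phase_end \<beta> (Suc j)}" and "I i t \<omega> \<noteq> k"
    and explored: "N \<le> pulls I i (I i t \<omega>) (t - 1) \<omega>"
    using exists_time_pulling_explored_arm[OF \<omega> T, of k N] few long by force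
  have t_T: "1 \<le> t" "t \<le> T" using t T by auto
  have "k \<in> S i (phase_of \<beta> t) \<omega>"
    using attacked_imp_active[OF \<omega>(1) j attacked] phase_of_eqI[of \<beta> j t] beta t by simp
  then have "ucb \<alpha> Z I i k t \<omega> \<le> ucb \<alpha> Z I i (I i t \<omega>) t \<omega>"
    using I_ucb i t_T \<omega>(1) by blast
  also have "\<dots> < ereal (\<mu> 1 + \<eta>)"
    using ucb_explored_arm_less[OF \<omega> pulled_arm_in_range[OF \<omega> i t_T(1)] t_T explored] up N \<eta>
      pulled_arm_in_range[OF \<omega> i t_T(1)] by blast
  finally have index: "ucb \<alpha> Z I i k t \<omega> < ereal (\<mu> 1 + \<eta>)" .
  define m where "m = pulls I i k (t - 1) \<omega>"
  have "m \<noteq> 0"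
    using index unfolding ucb_def m_def by (auto split: if_splits)
  have m_T: "m \<le> pulls I i k T \<omega>" unfolding m_def using t_T by (intro pulls_mono) simp
  have "reward_avg i k m \<omega> + sqrt (\<alpha> * ln t / m) < \<mu> 1 + \<eta>"
    using index \<open>m \<noteq> 0\<close> unfolding ucb_def muhat_eq_reward_avg m_def by simp
  moreover have "\<mu> k - sqrt (ln T / m) < reward_avg i k m \<omega>"
    using low \<open>m \<noteq> 0\<close> m_T pulls_le[of I i k T \<omega>] unfolding lower_confident_def by simp
  ultimately have bonus: "sqrt (\<alpha> * ln t / m) - sqrt (ln T / m) < \<Delta> + \<eta>"
    unfolding \<Delta>_def by linarith
  have "sqrt (\<alpha> * l) * sqrt (ln T / m) = sqrt (\<alpha> * (l * ln T) / m)"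
    by (simp add: real_sqrt_mult[symmetric] mult.assoc)
  also have "\<dots> \<le> sqrt (\<alpha> * ln t / m)"
    using late t alpha by (intro real_sqrt_le_mono divide_right_mono mult_left_mono) auto
  finally have "(sqrt (\<alpha> * l) - 1) * sqrt (ln T / m) < \<Delta> + \<eta>"
    using bonus by (simp add: algebra_simps)
  moreover have "\<Delta>\<^sup>2 * m < c * ln T"
  proof -
    have "\<Delta>\<^sup>2 * m \<le> \<Delta>\<^sup>2 * pulls I i k T \<omega>" using m_T by (intro mult_left_mono) auto
    also have "\<dots> < c * ln T" using few \<Delta> by (simp add: pos_less_divide_eq mult.commute)
    finally show ?thesis .
  qed
  then have "\<Delta> + \<eta> < (sqrt (\<alpha> * l) - 1) * sqrt (ln T / m)"
    using slack_less_bonus_gap[OF c l(1) \<Delta> _ _ slack] \<open>m \<noteq> 0\<close> by simp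
  ultimately show False by linarith
qed

definition explore_threshold :: "real \<Rightarrow> nat \<Rightarrow> nat" where
  "explore_threshold \<eta> T = nat \<lceil>\<alpha> * ln T / (\<eta> / 2)\<^sup>2\<rceil>"

lemma
  assumes "0 < \<eta>" "2 \<le> T"
  shows explore_threshold_ge_1: "1 \<le> explore_threshold \<eta> T"
    and explore_threshold_ge: "\<alpha> * ln T \<le> explore_threshold \<eta> T * (\<eta> / 2)\<^sup>2"
    and explore_threshold_le: "explore_threshold \<eta> T \<le> \<alpha> * ln T / (\<eta> / 2)\<^sup>2 + 1"
proof -
  have pos: "0 < \<alpha> * ln T / (\<eta> / 2)\<^sup>2" using assms alpha by simp
  then show "1 \<le> explore_threshold \<eta> T" unfolding explore_threshold_def by linarith
  have "\<alpha> * ln T / (\<eta> / 2)\<^sup>2 \<le> explore_threshold \<eta> T"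
    unfolding explore_threshold_def by linarith
  then show "\<alpha> * ln T \<le> explore_threshold \<eta> T * (\<eta> / 2)\<^sup>2" using assms(1) by (simp add: divide_le_eq)
  show "explore_threshold \<eta> T \<le> \<alpha> * ln T / (\<eta> / 2)\<^sup>2 + 1"
    unfolding explore_threshold_def using pos by linarith
qed

definition good_event :: "real \<Rightarrow> nat \<Rightarrow> 'w set" where
  "good_event \<eta> T = {\<omega> \<in> space M.
     (\<forall>k \<in> {2..K}. \<exists>j \<in> late_phases \<beta> T. attacked k j \<omega>) \<and>
     (\<forall>k \<in> {2..K}. lower_confident k T \<omega>) \<and>
     (\<forall>a \<in> {1..K}. upper_confident \<eta> (explore_threshold \<eta> T) a T \<omega>)}"

lemma
  shows pred_attacked_late: "Measurable.pred M (\<lambda>\<omega>. \<exists>j \<in> late_phases \<beta> T. attacked k j \<omega>)"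
    and pred_lower_confident: "k \<in> {1..K} \<Longrightarrow> Measurable.pred M (lower_confident k T)"
    and pred_upper_confident: "a \<in> {1..K} \<Longrightarrow> Measurable.pred M (upper_confident \<eta> N a T)"
proof -
  show "Measurable.pred M (\<lambda>\<omega>. \<exists>j \<in> late_phases \<beta> T. attacked k j \<omega>)"
    using attacked_event by (intro pred_intros_finite(4)) (auto simp: late_phases_def pred_def)
  show "Measurable.pred M (lower_confident k T)" if "k \<in> {1..K}"
    using borel_measurable_reward_avg[OF i that] unfolding lower_confident_def by measurable
  show "Measurable.pred M (upper_confident \<eta> N a T)" if "a \<in> {1..K}"
    using borel_measurable_reward_avg[OF i that] unfolding upper_confident_def by measurable
qed

lemma good_event_in_events: "good_event \<eta> T \<in> events"
proof -
  have "Measurable.pred M (\<lambda>\<omega>. \<forall>k \<in> {2..K}. lower_confident k T \<omega>)"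
    "Measurable.pred M (\<lambda>\<omega>. \<forall>a \<in> {1..K}. upper_confident \<eta> (explore_threshold \<eta> T) a T \<omega>)"
    using pred_lower_confident pred_upper_confident by (intro pred_intros_finite(3); simp)+
  then show ?thesis
    unfolding good_event_def using pred_attacked_late by (intro pred_intros_finite(3) predE) auto
qed

lemma prob_good_event_ge:
  assumes \<eta>: "0 < \<eta>" and T: "2 \<le> T"
  shows "1 - (real K * (1 - 1 / (real n * real K)) ^ card (late_phases \<beta> T) + 2 * real K / real T)
           \<le> prob (good_event \<eta> T)"
proof -
  let ?W = "late_phases \<beta> T" and ?N = "explore_threshold \<eta> T"
  define never where "never k = {\<omega> \<in> space M. \<forall>j \<in> ?W. \<not> attacked k j \<omega>}" for k
  define low where "low k = {\<omega> \<in> space M. \<not> lower_confident k T \<omega>}" for k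
  define up where "up a = {\<omega> \<in> space M. \<not> upper_confident \<eta> ?N a T \<omega>}" for a
  have events: "never k \<in> events" "k \<in> {1..K} \<Longrightarrow> low k \<in> events" "k \<in> {1..K} \<Longrightarrow> up k \<in> events"
    for k
  proof -
    have "never k = space M - {\<omega> \<in> space M. \<exists>j \<in> ?W. attacked k j \<omega>}"
      unfolding never_def by auto
    then show "never k \<in> events"
      using pred_attacked_late[of T k] by (simp add: pred_def sets.compl_sets)
  next
    assume k: "k \<in> {1..K}"
    note [measurable] = pred_lower_confident[OF k, of T] pred_upper_confident[OF k, of \<eta> ?N T]
    show "low k \<in> events" unfolding low_def by measurable
    show "up k \<in> events" unfolding up_def by measurable
  qed
  have "prob (space M - good_event \<eta> T) \<le>
      prob ((\<Union>k \<in> {2..K}. never k) \<union> (\<Union>k \<in> {2..K}. low k) \<union> (\<Union>a \<in> {1..K}. up a))"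
    using events by (intro finite_measure_mono) (auto simp: good_event_def never_def low_def up_def)
  also have "\<dots> \<le> (\<Sum>k = 2..K. prob (never k)) + (\<Sum>k = 2..K. prob (low k)) + (\<Sum>a = 1..K. prob (up a))"
    using events by (intro measure_Un_le[THEN order_trans] add_mono measure_UNION_le) auto
  also have "\<dots> \<le> real K * (1 - 1 / (real n * real K)) ^ card ?W + real K * (1 / T) + real K * (1 / T)"
  proof -
    have sum_le: "(\<Sum>k = m..K. f k) \<le> real K * b"
      if "1 \<le> m" "0 \<le> b" "\<And>k. k \<in> {1..K} \<Longrightarrow> f k \<le> b" for m and f :: "nat \<Rightarrow> real" and b
    proof -
      have "(\<Sum>k = m..K. f k) \<le> (\<Sum>k = m..K. b)" using that by (intro sum_mono) auto
      also have "\<dots> \<le> real K * b" using that(1,2) by (simp add: mult_right_mono)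
      finally show ?thesis .
    qed
    have "1 \<le> real n * real K" using mult_mono[of 1 "real n" 1 "real K"] n K by simp
    then have "1 / (real n * real K) \<le> 1" by simp
    then have "(\<Sum>k = 2..K. prob (never k)) \<le> real K * (1 - 1 / (real n * real K)) ^ card ?W"
      using prob_never_attacked unfolding never_def late_phases_def by (intro sum_le) auto
    moreover have "(\<Sum>k = 2..K. prob (low k)) \<le> real K * (1 / T)"
      using prob_reward_avg_below_radius T
      by (intro sum_le) (auto simp: low_def lower_confident_def not_less)
    moreover have "(\<Sum>a = 1..K. prob (up a)) \<le> real K * (1 / T)"
      using prob_reward_avg_above_slack[OF _ _ explore_threshold_ge_1 explore_threshold_ge] \<eta> T
      by (intro sum_le) (auto simp: up_def upper_confident_def not_less)
    ultimately show ?thesis by linarith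
  qed
  finally show ?thesis using prob_compl[OF good_event_in_events] by simp
qed

lemma tendsto_prob_good_event:
  assumes "0 < \<eta>"
  shows "(\<lambda>T. prob (good_event \<eta> T)) \<longlonglongrightarrow> 1"
proof (rule tendsto_sandwich)
  have "1 < real n * real K" using mult_mono[of 1 "real n" 2 "real K"] n K by simp
  then have "(\<lambda>T. (1 - 1 / (real n * real K)) ^ card (late_phases \<beta> T)) \<longlonglongrightarrow> 0"
    by (intro filterlim_compose[OF LIMSEQ_power_zero filterlim_card_late_phases]) (use beta in auto)
  then have "(\<lambda>T. 1 - (real K * (1 - 1 / (real n * real K)) ^ card (late_phases \<beta> T) +
      2 * real K / real T)) \<longlonglongrightarrow> 1 - (real K * 0 + 0)"
    by (intro tendsto_intros lim_const_over_n)
  then show "(\<lambda>T. 1 - (real K * (1 - 1 / (real n * real K)) ^ card (late_phases \<beta> T) +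
      2 * real K / real T)) \<longlonglongrightarrow> 1"
    by simp
  show "\<forall>\<^sub>F T in sequentially.
      1 - (real K * (1 - 1 / (real n * real K)) ^ card (late_phases \<beta> T) + 2 * real K / real T) \<le> prob (good_event \<eta> T)"
    using eventually_ge_at_top[of 2] by eventually_elim (rule prob_good_event_ge[OF assms])
qed auto

lemma eventually_pulls_ge_on_good_event:
  fixes c l \<eta> :: real
  assumes l: "0 \<le> l" "l < 1" "1 < sqrt (\<alpha> * l)" and \<eta>: "0 < \<eta>" and c: "0 < c"
    and slack: "\<And>k. k \<in> {2..K} \<Longrightarrow> sqrt c * ((\<mu> 1 - \<mu> k) + \<eta>) \<le> (sqrt (\<alpha> * l) - 1) * (\<mu> 1 - \<mu> k)"
  shows "\<forall>\<^sub>F T in sequentially. \<forall>\<omega> \<in> good_event \<eta> T. valid_sources \<omega> \<longrightarrow>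
           (\<forall>k \<in> {2..K}. c * ln T / (\<mu> 1 - \<mu> k)\<^sup>2 \<le> pulls I i k T \<omega>)"
proof -
  define D where "D = c / (\<mu> 1 - \<mu> 2)\<^sup>2 + K * (\<alpha> / (\<eta> / 2)\<^sup>2)"
  have "0 \<le> D" unfolding D_def using c alpha by simp
  from eventually_late_phases[OF beta l(1,2) this, of "real K + 1"] eventually_ge_at_top[of 2]
  show ?thesis
  proof eventually_elim
    case (elim T)
    let ?N = "explore_threshold \<eta> T"
    have ln_T: "0 < ln T" using elim by simp
    show ?case
    proof (intro ballI impI)
      fix \<omega> k assume \<omega>: "\<omega> \<in> good_event \<eta> T" "valid_sources \<omega>" and k: "k \<in> {2..K}"
      then obtain j where j: "j \<in> late_phases \<beta> T" "attacked k j \<omega>"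
        unfolding good_event_def by blast
      have phase: "1 \<le> j" "phase_end \<beta> (Suc j) \<le> T"
        "\<forall>t. phase_end \<beta> j < t \<longrightarrow> l * ln T \<le> ln t"
        "D * ln T + (real K + 1) \<le> real (phase_end \<beta> (Suc j) - phase_end \<beta> j)"
        using elim(1) j(1) by auto
      have confident: "\<omega> \<in> space M" "lower_confident k T \<omega>" "\<forall>a \<in> {1..K}. upper_confident \<eta> ?N a T \<omega>"
        using \<omega>(1) k unfolding good_event_def by auto
      have "c * ln T / (\<mu> 1 - \<mu> k)\<^sup>2 \<le> c * ln T / (\<mu> 1 - \<mu> 2)\<^sup>2"
        using mu_le_mu2[OF k] gap_pos[of 2] K c ln_T by (intro divide_left_mono power_mono) auto
      moreover have "real K * real ?N \<le> real K * (\<alpha> * ln T / (\<eta> / 2)\<^sup>2 + 1)"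
        using explore_threshold_le[OF \<eta> elim(2)] by (intro mult_left_mono) auto
      ultimately have "c * ln T / (\<mu> 1 - \<mu> k)\<^sup>2 + real K * real ?N
          < real (phase_end \<beta> (Suc j) - phase_end \<beta> j)"
        using phase(4) unfolding D_def by (simp add: algebra_simps)
      from pulls_ge_if_attacked[OF confident(1) \<omega>(2) k phase(1) j(2) phase(2) confident(2,3)
          explore_threshold_ge_1[OF \<eta> elim(2)] explore_threshold_ge[OF \<eta> elim(2)] phase(3) this
          slack[OF k] l(3) l(1) c \<eta>]
      show "c * ln T / (\<mu> 1 - \<mu> k)\<^sup>2 \<le> pulls I i k T \<omega>" .
    qed
  qed
qed

lemma regret_ge_of_pulls_ge:
  assumes \<omega>: "\<omega> \<in> space M" "valid_sources \<omega>"
    and pulls: "\<forall>k \<in> {2..K}. b / (\<mu> 1 - \<mu> k)\<^sup>2 \<le> pulls I i k T \<omega>"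
  shows "b * (\<Sum>k = 2..K. 1 / (\<mu> 1 - \<mu> k)) \<le> regret \<mu> I i T \<omega>"
proof -
  have "b * (\<Sum>k = 2..K. 1 / (\<mu> 1 - \<mu> k)) = (\<Sum>k = 2..K. (\<mu> 1 - \<mu> k) * (b / (\<mu> 1 - \<mu> k)\<^sup>2))"
    unfolding sum_distrib_left using gap_pos by (intro sum.cong) (auto simp: power2_eq_square)
  also have "\<dots> \<le> (\<Sum>k = 2..K. (\<mu> 1 - \<mu> k) * pulls I i k T \<omega>)"
    using pulls gap_pos by (intro sum_mono mult_left_mono) (auto simp: less_imp_le)
  also have "\<dots> = (\<Sum>k = 1..K. (\<mu> 1 - \<mu> k) * pulls I i k T \<omega>)"
    using K by (subst sum.atLeast_Suc_atMost[of 1 K]) (auto simp: numeral_2_eq_2)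
  also have "\<dots> = regret \<mu> I i T \<omega>"
    using pulled_arm_in_range[OF \<omega> i] by (intro regret_eq_sum_pulls[symmetric]) auto
  finally show ?thesis .
qed

lemma prob_good_event_le_prob_regret_ge:
  assumes T: "2 \<le> T"
    and pulls: "\<forall>\<omega> \<in> good_event \<eta> T. valid_sources \<omega> \<longrightarrow>
      (\<forall>k \<in> {2..K}. c * ln T / (\<mu> 1 - \<mu> k)\<^sup>2 \<le> pulls I i k T \<omega>)"
  shows "prob (good_event \<eta> T) \<le>
    prob {\<omega> \<in> space M. regret \<mu> I i T \<omega> / ln T \<ge> c * (\<Sum>k = 2..K. 1 / (\<mu> 1 - \<mu> k))}"
proof (rule finite_measure_mono_AE)
  show "{\<omega> \<in> space M. regret \<mu> I i T \<omega> / ln T \<ge> c * (\<Sum>k = 2..K. 1 / (\<mu> 1 - \<mu> k))} \<in> events"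
    using borel_measurable_regret by measurable
  show "AE \<omega> in M. \<omega> \<in> good_event \<eta> T \<longrightarrow>
      \<omega> \<in> {\<omega> \<in> space M. regret \<mu> I i T \<omega> / ln T \<ge> c * (\<Sum>k = 2..K. 1 / (\<mu> 1 - \<mu> k))}"
    using AE_valid_sources
  proof eventually_elim
    case (elim \<omega>)
    show ?case
    proof
      assume good: "\<omega> \<in> good_event \<eta> T"
      then have "\<omega> \<in> space M" unfolding good_event_def by simp
      moreover have "c * ln T * (\<Sum>k = 2..K. 1 / (\<mu> 1 - \<mu> k)) \<le> regret \<mu> I i T \<omega>"
        using regret_ge_of_pulls_ge \<open>\<omega> \<in> space M\<close> pulls elim good by blast
      ultimately show "\<omega> \<in> {\<omega> \<in> space M. regret \<mu> I i T \<omega> / ln T \<ge> c * (\<Sum>k = 2..K. 1 / (\<mu> 1 - \<mu> k))}"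
        using T by (simp add: pos_le_divide_eq mult_ac)
    qed
  qed
qed

lemma tendsto_prob_regret_ge:
  assumes \<epsilon>: "0 < \<epsilon>" "\<epsilon> < 1"
  shows "(\<lambda>T. prob {\<omega> \<in> space M. regret \<mu> I i T \<omega> / ln T \<ge>
            (1 - \<epsilon>) * \<alpha> * (1 - 1 / sqrt \<alpha>)\<^sup>2 * (\<Sum>k = 2..K. 1 / (\<mu> 1 - \<mu> k))}) \<longlonglongrightarrow> 1"
proof -
  define c where "c = (1 - \<epsilon>) * \<alpha> * (1 - 1 / sqrt \<alpha>)\<^sup>2"
  have c: "0 < c" unfolding c_def using alpha \<epsilon> by simp
  have gap: "0 < \<mu> 1 - \<mu> 2" using mu_gap by simp
  obtain l \<eta> where l: "0 \<le> l" "l < 1" "1 < sqrt (\<alpha> * l)" and \<eta>: "0 < \<eta>"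
    and slack: "\<And>\<Delta>. \<mu> 1 - \<mu> 2 \<le> \<Delta> \<Longrightarrow> sqrt c * (\<Delta> + \<eta>) \<le> (sqrt (\<alpha> * l) - 1) * \<Delta>"
    using exists_slack_parameters[OF alpha \<epsilon> gap] unfolding c_def by blast
  have "sqrt c * ((\<mu> 1 - \<mu> k) + \<eta>) \<le> (sqrt (\<alpha> * l) - 1) * (\<mu> 1 - \<mu> k)" if "k \<in> {2..K}" for k
    using slack mu_le_mu2[OF that] by simp
  then have "\<forall>\<^sub>F T in sequentially. \<forall>\<omega> \<in> good_event \<eta> T. valid_sources \<omega> \<longrightarrow>
      (\<forall>k \<in> {2..K}. c * ln T / (\<mu> 1 - \<mu> k)\<^sup>2 \<le> pulls I i k T \<omega>)"
    by (rule eventually_pulls_ge_on_good_event[OF l \<eta> c])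
  with eventually_ge_at_top[of 2] have "\<forall>\<^sub>F T in sequentially. prob (good_event \<eta> T) \<le>
      prob {\<omega> \<in> space M. regret \<mu> I i T \<omega> / ln T \<ge> c * (\<Sum>k = 2..K. 1 / (\<mu> 1 - \<mu> k))}"
    by eventually_elim (rule prob_good_event_le_prob_regret_ge)
  then have "(\<lambda>T. prob {\<omega> \<in> space M. regret \<mu> I i T \<omega> / ln T \<ge>
      c * (\<Sum>k = 2..K. 1 / (\<mu> 1 - \<mu> k))}) \<longlonglongrightarrow> 1"
    by (intro tendsto_sandwich[OF _ _ tendsto_prob_good_event[OF \<eta>] tendsto_const]) auto
  then show ?thesis unfolding c_def by (simp add: mult.assoc)
qed

lemma liminf_expected_regret_ge:
  "ereal (\<alpha> * (1 - 1 / sqrt \<alpha>)\<^sup>2 * (\<Sum>k = 2..K. 1 / (\<mu> 1 - \<mu> k)))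
     \<le> liminf (\<lambda>T. ereal ((\<integral>\<omega>. regret \<mu> I i T \<omega> \<partial>M) / ln T))"
proof (rule liminf_expectation_ge_of_tendsto_prob)
  show "integrable M (regret \<mu> I i T)" for T
  proof (rule Bochner_Integration.integrable_bound[where f = "\<lambda>_. real T"])
    show "AE \<omega> in M. norm (regret \<mu> I i T \<omega>) \<le> norm (real T)"
      using AE_valid_sources AE_space by eventually_elim (simp add: regret_nonneg regret_le)
  qed (simp_all add: borel_measurable_regret)
  show "AE \<omega> in M. 0 \<le> regret \<mu> I i T \<omega>" for T
    using AE_valid_sources AE_space by eventually_elim (simp add: regret_nonneg)
  show "\<forall>\<^sub>F T in sequentially. 0 < ln (real T)"
    using eventually_ge_at_top[of 2] by eventually_elim simp
  have "0 < (\<Sum>k = 2..K. 1 / (\<mu> 1 - \<mu> k))" using gap_pos K by (intro sum_pos) auto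
  then show "0 < \<alpha> * (1 - 1 / sqrt \<alpha>)\<^sup>2 * (\<Sum>k = 2..K. 1 / (\<mu> 1 - \<mu> k))" using alpha by simp
  show "(\<lambda>T. prob {\<omega> \<in> space M. regret \<mu> I i T \<omega> / ln T \<ge>
          (1 - \<epsilon>) * (\<alpha> * (1 - 1 / sqrt \<alpha>)\<^sup>2 * (\<Sum>k = 2..K. 1 / (\<mu> 1 - \<mu> k)))}) \<longlonglongrightarrow> 1"
    if "0 < \<epsilon>" "\<epsilon> < 1" for \<epsilon>
    using tendsto_prob_regret_ge[OF that] by (simp add: mult.assoc)
qed

end


theorem theorem1:
  fixes M :: "'w measure"
    and K n Ssz :: nat
    and \<mu> :: "nat \<Rightarrow> real"
    and \<alpha> \<beta> :: real
    and Shat :: "nat \<Rightarrow> nat set"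
    and U1 L1 :: "nat \<Rightarrow> nat"
    and Z :: "src \<Rightarrow> 'w \<Rightarrow> nat"
    and I :: "nat \<Rightarrow> nat \<Rightarrow> 'w \<Rightarrow> nat"
    and B U L :: "nat \<Rightarrow> nat \<Rightarrow> 'w \<Rightarrow> nat"
    and i :: nat
  defines "S \<equiv> (\<lambda>a j \<omega>. Shat a \<union> {U a j \<omega>, L a j \<omega>})"
    and "R \<equiv> (\<lambda>a j \<omega>. if Z (Hsel a j) \<omega> \<le> n then B (Z (Hsel a j) \<omega>) j \<omega>
                      else Z (Mal a j) \<omega>)"
  assumes M: "prob_space M"
    and K: "2 \<le> K" and n: "1 \<le> n"
    and mu_range: "\<forall>k \<in> {1..K}. 0 < \<mu> k \<and> \<mu> k < 1"
    and mu_gap: "\<mu> 1 > \<mu> 2"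
    and mu_sorted: "\<forall>k. 2 \<le> k \<and> k < K \<longrightarrow> \<mu> (k + 1) \<le> \<mu> k"
    and alpha: "\<alpha> > 1" and beta: "\<beta> > 1"
    and Shat: "\<forall>a \<in> {1..n}. Shat a \<subseteq> {1..K} \<and> card (Shat a) = Ssz"
    and UL1: "\<forall>a \<in> {1..n}. U1 a \<in> {1..K} - Shat a \<and> L1 a \<in> {1..K} - Shat a \<and> U1 a \<noteq> L1 a"
    and best_sticky: "1 \<in> (\<Union>a \<in> {1..n}. Shat a)"
    \<comment> \<open>independent random sources: rewards, agent selection, malicious samples\<close>
    and indep: "prob_space.indep_vars M (\<lambda>_. count_space UNIV) Z (src_idx n K)"
    and rew_distr: "\<forall>a \<in> {1..n}. \<forall>k \<in> {1..K}. \<forall>r \<ge> 1.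
        distr M (count_space UNIV) (Z (Rew a k r)) = measure_pmf (bern01 (\<mu> k))"
    and H_distr: "\<forall>a \<in> {1..n}. \<forall>j \<ge> 1.
        distr M (count_space UNIV) (Z (Hsel a j)) = measure_pmf (pmf_of_set ({1..n+1} - {a}))"
    and mal_distr: "\<forall>a \<in> {1..n}. \<forall>j \<ge> 1.
        distr M (count_space UNIV) (Z (Mal a j)) = measure_pmf (pmf_of_set {1..K})"
    \<comment> \<open>the algorithm, run by every honest agent (no blocklist updates)\<close>
    and I_meas: "\<forall>a t. I a t \<in> measurable M (count_space UNIV)"
    and I_ucb: "\<forall>a \<in> {1..n}. \<forall>t \<ge> 1. \<forall>\<omega> \<in> space M.
        I a t \<omega> \<in> S a (phase_of \<beta> t) \<omega> \<and>
        (\<forall>k \<in> S a (phase_of \<beta> t) \<omega>. ucb \<alpha> Z I a k t \<omega> \<le> ucb \<alpha> Z I a (I a t \<omega>) t \<omega>)"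
    and B_def: "\<forall>a \<in> {1..n}. \<forall>j \<ge> 1. \<forall>\<omega> \<in> space M.
        B a j \<omega> \<in> S a j \<omega> \<and>
        (\<forall>k \<in> S a j \<omega>. phase_plays \<beta> I a k j \<omega> \<le> phase_plays \<beta> I a (B a j \<omega>) j \<omega>)"
    and UL_init: "\<forall>a \<in> {1..n}. \<forall>\<omega> \<in> space M. U a 1 \<omega> = U1 a \<and> L a 1 \<omega> = L1 a"
    and UL_step: "\<forall>a \<in> {1..n}. \<forall>j \<ge> 1. \<forall>\<omega> \<in> space M.
        (R a j \<omega> \<in> S a j \<omega> \<longrightarrow> U a (j+1) \<omega> = U a j \<omega> \<and> L a (j+1) \<omega> = L a j \<omega>) \<and>
        (R a j \<omega> \<notin> S a j \<omega> \<longrightarrow>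
           U a (j+1) \<omega> \<in> {U a j \<omega>, L a j \<omega>} \<and>
           (\<forall>k \<in> {U a j \<omega>, L a j \<omega>}. phase_plays \<beta> I a k j \<omega> \<le> phase_plays \<beta> I a (U a (j+1) \<omega>) j \<omega>) \<and>
           L a (j+1) \<omega> = R a j \<omega>)"
    and i: "i \<in> {1..n}"
  shows "(\<forall>\<epsilon>. 0 < \<epsilon> \<and> \<epsilon> < 1 \<longrightarrow>
           ((\<lambda>T. measure M {\<omega> \<in> space M. regret \<mu> I i T \<omega> / ln (real T) \<ge>
               (1 - \<epsilon>) * \<alpha> * (1 - 1 / sqrt \<alpha>)\<^sup>2 * (\<Sum>k = 2..K. 1 / (\<mu> 1 - \<mu> k))})
            \<longlonglongrightarrow> 1))
       \<and> liminf (\<lambda>T. ereal ((\<integral>\<omega>. regret \<mu> I i T \<omega> \<partial>M) / ln (real T)))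
           \<ge> ereal (\<alpha> * (1 - 1 / sqrt \<alpha>)\<^sup>2 * (\<Sum>k = 2..K. 1 / (\<mu> 1 - \<mu> k)))"
proof -
  interpret bandit_under_attack M K n Ssz \<mu> \<alpha> \<beta> Shat U1 L1 Z I B U L i S R
    using M K n mu_range mu_gap mu_sorted alpha beta Shat UL1 indep rew_distr H_distr mal_distr
      I_meas I_ucb B_def UL_init UL_step i
    by (simp add: bandit_under_attack_def bandit_under_attack_axioms_def S_def R_def)
  show ?thesis using tendsto_prob_regret_ge liminf_expected_regret_ge by auto
qed

end
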